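(* Let $d\ge2$. For a faithful state $\rho=\rho(\xi)\in\mathcal{S}(\mathbb{C}^d)$ define $$\hat\rho=\log\rho-\frac1d\mathrm{Tr}(\log\rho)\,I,\qquad \hat\xi_i=\frac{\partial}{\partial\xi_i}\mathrm{Tr}(\rho\log\rho)\quad(i=1,\dots,d^2-1).$$ Then (i) $\hat\rho$ is the Hermitian traceless matrix with entries $\hat\rho_{kk}=d\hat\xi_k-\sum_{i=1}^{d-1}\hat\xi_i$ for $k<d$, $\hat\rho_{dd}=-\sum_{i=1}^{d-1}\hat\xi_i$, and $\hat\rho_{jk}=\hat\xi_{a_{jk}}-i\hat\xi_{b_{jk}}$, $\hat\rho_{kj}=\hat\xi_{a_{jk}}+i\hat\xi_{b_{jk}}$ for $j<k$. (ii) Let $\psi(\hat\rho)=\log\big(\mathrm{Tr}\exp\hat\rho\big)$, regarded via (i) as a function of $\hat\xi\in\mathbb{R}^{d^2-1}$, and for faithful $\rho,\sigma$ with dual coordinates $\hat\xi,\hat\eta$ define $$\hat D(\hat\rho\|\hat\sigma)=\psi(\hat\xi)-\psi(\hat\eta)-\langle\hat\xi-\hat\eta,\nabla\psi(\hat\eta)\rangle.$$ Then $D(\rho\|\sigma)=\hat D(\hat\sigma\|\hat\rho)$ for all faithful $\rho,\sigma$, and for faithful $\sigma_1,\sigma_2$ the map $\hat\rho\mapsto\hat D(\hat\rho\|\hat\sigma_1)-\hat D(\hat\rho\|\hat\sigma_2)$ is affine in $\hat\xi$, so the Voronoi diagram with respect to $\hat D$ with sites as second argument is linear.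
   Context: $\mathcal{S}(\mathbb{C}^d)$ is the set of $d\times d$ density matrices; faithful means rank $d$. Every Hermitian trace-one matrix is written $\rho(\xi)$, $\xi\in\mathbb{R}^{d^2-1}$, with $\rho_{kk}=(\xi_k+1)/d$ for $k<d$, $\rho_{dd}=(1-\sum_{i=1}^{d-1}\xi_i)/d$, and for $j<k$, $\rho_{jk}=(\xi_{a_{jk}}-i\xi_{b_{jk}})/2$, $\rho_{kj}=\overline{\rho_{jk}}$, where the pairs $(a_{jk},b_{jk})$ are a fixed partition of $\{d,\dots,d^2-1\}$ into pairs. Matrix functions act on eigenvalues. $D(\rho\|\sigma)=\mathrm{Tr}\,\rho(\log\rho-\log\sigma)$; $\langle\cdot,\cdot\rangle$ is the standard inner product on $\mathbb{R}^{d^2-1}$. *)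

theory Defs
  imports "Jordan_Normal_Form.Matrix" "Jordan_Normal_Form.DL_Rank" Complex_Main
begin

(* Conventions: matrices are JNF complex matrices, rows/columns indexed 0..d-1
   (paper index k corresponds to Isabelle index k-1).  Coordinate vectors
   xi :: nat => real use the paper's indices 1..d^2-1 (other values are ignored). *)

definition mtrace :: "complex mat \<Rightarrow> complex" where
  "mtrace A = (\<Sum>i<dim_row A. A $$ (i,i))"

definition adj :: "complex mat \<Rightarrow> complex mat" where
  "adj A = mat (dim_col A) (dim_row A) (\<lambda>(i,j). cnj (A $$ (j,i)))"

definition hermitian :: "complex mat \<Rightarrow> bool" where
  "hermitian A \<longleftrightarrow> dim_row A = dim_col A \<and> adj A = A"

definition unitary :: "complex mat \<Rightarrow> bool" where
  "unitary U \<longleftrightarrow> dim_row U = dim_col U \<and> adj U * U = 1\<^sub>m (dim_row U)"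

definition rdiag :: "nat \<Rightarrow> (nat \<Rightarrow> real) \<Rightarrow> complex mat" where
  "rdiag n s = mat n n (\<lambda>(i,j). if i = j then complex_of_real (s i) else 0)"

definition mat_fun :: "(real \<Rightarrow> real) \<Rightarrow> complex mat \<Rightarrow> complex mat" where
  "mat_fun f A = (SOME B. \<exists>U s. U \<in> carrier_mat (dim_row A) (dim_row A) \<and> unitary U \<and>
      A = U * rdiag (dim_row A) s * adj U \<and> B = U * rdiag (dim_row A) (f \<circ> s) * adj U)"

definition density_matrix :: "nat \<Rightarrow> complex mat \<Rightarrow> bool" where
  "density_matrix d A \<longleftrightarrow> A \<in> carrier_mat d d \<and> hermitian A \<and> mtrace A = 1 \<and>
     (\<forall>v \<in> carrier_vec d. 0 \<le> Re (conjugate v \<bullet> (A *\<^sub>v v)))"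

definition faithful :: "nat \<Rightarrow> complex mat \<Rightarrow> bool" where
  "faithful d A \<longleftrightarrow> density_matrix d A \<and> vec_space.rank d (A :: complex mat) = d"

definition pair_partition :: "nat \<Rightarrow> (nat \<Rightarrow> nat \<Rightarrow> nat) \<Rightarrow> (nat \<Rightarrow> nat \<Rightarrow> nat) \<Rightarrow> bool" where
  "pair_partition d a b \<longleftrightarrow>
     bij_betw (\<lambda>(j,k,t). if t then a j k else b j k) {(j,k,t). j < k \<and> k < d} {d..<d^2}"

definition rho_of :: "nat \<Rightarrow> (nat \<Rightarrow> nat \<Rightarrow> nat) \<Rightarrow> (nat \<Rightarrow> nat \<Rightarrow> nat) \<Rightarrow> (nat \<Rightarrow> real) \<Rightarrow> complex mat" where
  "rho_of d a b \<xi> = mat d d (\<lambda>(j,k).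
     if j = k then
       (if k < d - 1 then complex_of_real ((\<xi> (k+1) + 1) / real d)
        else complex_of_real ((1 - (\<Sum>i=1..d-1. \<xi> i)) / real d))
     else if j < k then (complex_of_real (\<xi> (a j k)) - \<i> * complex_of_real (\<xi> (b j k))) / 2
     else (complex_of_real (\<xi> (a k j)) + \<i> * complex_of_real (\<xi> (b k j))) / 2)"

definition hatrho_of :: "nat \<Rightarrow> (nat \<Rightarrow> nat \<Rightarrow> nat) \<Rightarrow> (nat \<Rightarrow> nat \<Rightarrow> nat) \<Rightarrow> (nat \<Rightarrow> real) \<Rightarrow> complex mat" where
  "hatrho_of d a b y = mat d d (\<lambda>(j,k).
     if j = k then
       (if k < d - 1 then complex_of_real (real d * y (k+1) - (\<Sum>i=1..d-1. y i))
        else complex_of_real (- (\<Sum>i=1..d-1. y i)))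
     else if j < k then complex_of_real (y (a j k)) - \<i> * complex_of_real (y (b j k))
     else complex_of_real (y (a k j)) + \<i> * complex_of_real (y (b k j)))"

definition partial :: "((nat \<Rightarrow> real) \<Rightarrow> real) \<Rightarrow> (nat \<Rightarrow> real) \<Rightarrow> nat \<Rightarrow> real" where
  "partial f x i = (SOME D. ((\<lambda>t. f (x(i := t))) has_real_derivative D) (at (x i)))"

definition hatrho :: "nat \<Rightarrow> complex mat \<Rightarrow> complex mat" where
  "hatrho d A = mat_fun ln A - (mtrace (mat_fun ln A) / of_nat d) \<cdot>\<^sub>m 1\<^sub>m d"

definition hatxi :: "nat \<Rightarrow> (nat \<Rightarrow> nat \<Rightarrow> nat) \<Rightarrow> (nat \<Rightarrow> nat \<Rightarrow> nat) \<Rightarrow> (nat \<Rightarrow> real) \<Rightarrow> nat \<Rightarrow> real" where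
  "hatxi d a b \<xi> i = partial (\<lambda>x. Re (mtrace (rho_of d a b x * mat_fun ln (rho_of d a b x)))) \<xi> i"

definition psi :: "nat \<Rightarrow> (nat \<Rightarrow> nat \<Rightarrow> nat) \<Rightarrow> (nat \<Rightarrow> nat \<Rightarrow> nat) \<Rightarrow> (nat \<Rightarrow> real) \<Rightarrow> real" where
  "psi d a b y = ln (Re (mtrace (mat_fun exp (hatrho_of d a b y))))"

definition Dhat :: "nat \<Rightarrow> (nat \<Rightarrow> nat \<Rightarrow> nat) \<Rightarrow> (nat \<Rightarrow> nat \<Rightarrow> nat) \<Rightarrow> (nat \<Rightarrow> real) \<Rightarrow> (nat \<Rightarrow> real) \<Rightarrow> real" where
  "Dhat d a b x y = psi d a b x - psi d a b y
     - (\<Sum>i\<in>{1..<d^2}. (x i - y i) * partial (psi d a b) y i)"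

definition rel_entropy :: "complex mat \<Rightarrow> complex mat \<Rightarrow> real" where
  "rel_entropy A B = Re (mtrace (A * (mat_fun ln A - mat_fun ln B)))"

end

theory Submission
  imports Defs "Jordan_Normal_Form.Schur_Decomposition"
begin

(*
  Write E_i = rho_dir d a b i for the derivative of xi |-> rho(xi) in the i-th coordinate.
  If a scalar function phi satisfies 0 <= phi y - phi x - phi' x (y - x) <= K (y - x)^2 on an
  interval containing the spectra of A + t E for small t, then Klein's inequality and its
  converse squeeze Tr phi(A + t E) - Tr phi(A) - t Tr (phi'(A) E) between 0 and K t^2 Tr E^2,
  so d/dt Tr phi(A + t E) = Tr (phi'(A) E) at t = 0.  For phi x = x ln x this gives
  hatxi_i = Tr ((log rho) E_i); as the E_i and the coordinate matrices of hatrho_of are dual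
  bases modulo the identity, hatrho_of hatxi is the traceless part of log rho.  Hence
  exp hatrho = rho / (det rho)^(1/d), so psi hatxi = - Tr (log rho) / d, and phi = exp yields
  the gradient of psi as the coordinates of rho against the hatrho_of basis.  Substituting into
  the Bregman divergence of psi leaves Tr (rho (log rho - log sigma)), and a difference of
  Bregman divergences with fixed second arguments is affine in the first argument.
*)

lemma dim_adj[simp]: "dim_row (adj A) = dim_col A" "dim_col (adj A) = dim_row A"
  by (auto simp: adj_def)

lemma index_adj[simp]: "i < dim_col A \<Longrightarrow> j < dim_row A \<Longrightarrow> adj A $$ (i,j) = cnj (A $$ (j,i))"
  by (auto simp: adj_def)

lemma adj_carrier[simp]: "A \<in> carrier_mat m n \<Longrightarrow> adj A \<in> carrier_mat n m"
  unfolding carrier_mat_def by simp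

lemma adj_adj[simp]: "adj (adj A) = A"
  by (rule eq_matI) auto

lemma adj_mult: assumes "A \<in> carrier_mat m n" "B \<in> carrier_mat n p"
  shows "adj (A * B) = adj B * adj A"
proof (rule eq_matI)
  fix i j assume "i < dim_row (adj B * adj A)" "j < dim_col (adj B * adj A)"
  then show "adj (A * B) $$ (i, j) = (adj B * adj A) $$ (i, j)"
    using assms by (auto simp: scalar_prod_def mult.commute)
qed (use assms in auto)

lemma adj_one[simp]: "adj (1\<^sub>m n) = 1\<^sub>m n"
  by (rule eq_matI) auto

lemma rdiag_carrier[simp]: "rdiag n s \<in> carrier_mat n n" and dim_rdiag[simp]: "dim_row (rdiag n s) = n" "dim_col (rdiag n s) = n"
  by (auto simp: rdiag_def)

lemma index_rdiag[simp]: "i < n \<Longrightarrow> j < n \<Longrightarrow> rdiag n s $$ (i,j) = (if i = j then complex_of_real (s i) else 0)"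
  by (auto simp: rdiag_def)

lemma adj_rdiag[simp]: "adj (rdiag n s) = rdiag n s"
  by (rule eq_matI) auto

lemma mult_carrier_mat_square[simp]: "A \<in> carrier_mat n n \<Longrightarrow> B \<in> carrier_mat n n \<Longrightarrow> A * B \<in> carrier_mat n n"
  by auto

lemma assoc_mult_square: "A \<in> carrier_mat n n \<Longrightarrow> B \<in> carrier_mat n n \<Longrightarrow> C \<in> carrier_mat n n \<Longrightarrow> A * B * C = A * (B * C)"
  by (rule assoc_mult_mat)

lemma unitary_mult_adj: assumes "U \<in> carrier_mat n n" "unitary U"
  shows "U * adj U = 1\<^sub>m n"
  using mat_mult_left_right_inverse[of "adj U" n U] assms by (auto simp: unitary_def)

lemma unitary_adj_mult: assumes "U \<in> carrier_mat n n" "unitary U"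
  shows "adj U * U = 1\<^sub>m n"
  using assms by (auto simp: unitary_def)

lemma unitary_mult: assumes "U \<in> carrier_mat n n" "unitary U" "V \<in> carrier_mat n n" "unitary V"
  shows "unitary (U * V)"
proof -
  have "adj (U * V) * (U * V) = adj V * adj U * (U * V)"
    using assms by (simp add: adj_mult)
  also have "\<dots> = adj V * (adj U * (U * V))"
    using assms by (simp add: assoc_mult_mat[of _ n n _ n _ n])
  also have "adj U * (U * V) = (adj U * U) * V"
    using assms by (simp add: assoc_mult_mat[of _ n n _ n _ n])
  also have "\<dots> = V" using assms by (simp add: unitary_adj_mult)
  also have "adj V * V = 1\<^sub>m n" using assms by (simp add: unitary_adj_mult)
  finally show ?thesis using assms by (simp add: unitary_def)
qed

lemma unitary_adj: assumes "U \<in> carrier_mat n n" "unitary U"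
  shows "unitary (adj U)"
  using unitary_mult_adj[OF assms] assms by (simp add: unitary_def)

lemma unitary_adj_mult_cancel: assumes "U \<in> carrier_mat n n" "unitary U" "X \<in> carrier_mat n m"
  shows "adj U * (U * X) = X"
proof -
  have "adj U * (U * X) = (adj U * U) * X" using assms by (simp add: assoc_mult_mat[of _ n n _ n _ m])
  then show ?thesis using assms by (simp add: unitary_adj_mult)
qed

lemma unitary_mult_adj_cancel: assumes "U \<in> carrier_mat n n" "unitary U" "X \<in> carrier_mat n m"
  shows "U * (adj U * X) = X"
proof -
  have "U * (adj U * X) = (U * adj U) * X" using assms by (simp add: assoc_mult_mat[of _ n n _ n _ m])
  then show ?thesis using assms by (simp add: unitary_mult_adj)
qed

lemma index_mult_rdiag: assumes "A \<in> carrier_mat m n" "i < m" "j < n"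
  shows "(A * rdiag n s) $$ (i,j) = A $$ (i,j) * s j"
proof -
  have "(A * rdiag n s) $$ (i,j) = (\<Sum>k\<in>{0..<n}. A $$ (i,k) * (if k = j then complex_of_real (s k) else 0))"
    using assms by (auto simp: scalar_prod_def intro!: sum.cong)
  also have "\<dots> = A $$ (i,j) * s j" using assms
    by (simp add: if_distrib[where f="\<lambda>x. _ * x"] sum.delta cong: if_cong)
  finally show ?thesis .
qed

lemma index_rdiag_mult: assumes "A \<in> carrier_mat n m" "i < n" "j < m"
  shows "(rdiag n s * A) $$ (i,j) = s i * A $$ (i,j)"
proof -
  have "(rdiag n s * A) $$ (i,j) = (\<Sum>k\<in>{0..<n}. (if i = k then complex_of_real (s i) else 0) * A $$ (k,j))"
    using assms by (auto simp: scalar_prod_def intro!: sum.cong)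
  also have "\<dots> = s i * A $$ (i,j)" using assms
    by (simp add: if_distrib[where f="\<lambda>x. x * _"] sum.delta cong: if_cong)
  finally show ?thesis .
qed

lemma rdiag_mult_rdiag: "rdiag n f * rdiag n g = rdiag n (\<lambda>i. f i * g i)"
proof (rule eq_matI)
  fix i j assume "i < dim_row (rdiag n (\<lambda>i. f i * g i))" "j < dim_col (rdiag n (\<lambda>i. f i * g i))"
  then show "(rdiag n f * rdiag n g) $$ (i, j) = rdiag n (\<lambda>i. f i * g i) $$ (i, j)"
    by (subst index_mult_rdiag[of _ n n]) auto
qed auto

lemma index_conj_rdiag: assumes "U \<in> carrier_mat n n" "i < n" "j < n"
  shows "(U * rdiag n s * adj U) $$ (i,j) = (\<Sum>k<n. U $$ (i,k) * s k * cnj (U $$ (j,k)))"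
proof -
  have "(U * rdiag n s * adj U) $$ (i,j) = (\<Sum>k\<in>{0..<n}. (U * rdiag n s) $$ (i,k) * adj U $$ (k,j))"
    using assms by (auto simp: scalar_prod_def intro!: sum.cong)
  also have "\<dots> = (\<Sum>k<n. U $$ (i,k) * s k * cnj (U $$ (j,k)))"
    using assms by (auto simp: atLeast0LessThan index_mult_rdiag[of U n n] simp del: index_mult_mat intro!: sum.cong)
  finally show ?thesis .
qed

lemma hermitian_index: "hermitian A \<Longrightarrow> i < dim_row A \<Longrightarrow> j < dim_row A \<Longrightarrow> A $$ (i,j) = cnj (A $$ (j,i))"
  unfolding hermitian_def by (metis index_adj)

lemma hermitianI: assumes "A \<in> carrier_mat n n" "\<And>i j. i < n \<Longrightarrow> j < n \<Longrightarrow> A $$ (i,j) = cnj (A $$ (j,i))"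
  shows "hermitian A"
proof -
  have "adj A = A"
  proof (rule eq_matI)
    fix i j assume "i < dim_row A" "j < dim_col A"
    then show "adj A $$ (i,j) = A $$ (i,j)" using assms(1) assms(2)[of j i] by simp
  qed (use assms(1) in auto)
  then show ?thesis using assms(1) unfolding hermitian_def by auto
qed

lemma hermitian_adj_conj: assumes "A \<in> carrier_mat n n" "hermitian A" "W \<in> carrier_mat n m"
  shows "hermitian (adj W * A * W)"
proof -
  have c: "adj W * A \<in> carrier_mat m n" using assms by (metis adj_carrier mult_carrier_mat)
  have "adj (adj W * A * W) = adj W * adj (adj W * A)" using assms adj_mult[OF c assms(3)] by simp
  also have "adj (adj W * A) = adj A * W" using assms adj_mult[of "adj W" m n A n] by simp
  also have "adj A = A" using assms by (simp add: hermitian_def)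
  finally show ?thesis using assms unfolding hermitian_def
    by (simp add: assoc_mult_mat[of _ m n _ n _ m])
qed

lemma hermitian_minus: assumes "A \<in> carrier_mat n n" "hermitian A" "B \<in> carrier_mat n n" "hermitian B"
  shows "hermitian (A - B)"
proof (rule hermitianI[of _ n])
  show "A - B \<in> carrier_mat n n" using assms by auto
  fix i j assume "i < n" "j < n"
  then show "(A - B) $$ (i, j) = cnj ((A - B) $$ (j, i))"
    using assms hermitian_index[OF assms(2), of i j] hermitian_index[OF assms(4), of i j] by simp
qed

lemma hermitian_add_smult: assumes A: "A \<in> carrier_mat n n" "hermitian A" and E: "E \<in> carrier_mat n n" "hermitian E"
  shows "hermitian (A + complex_of_real t \<cdot>\<^sub>m E)"
proof (rule hermitianI[of _ n])
  show "A + complex_of_real t \<cdot>\<^sub>m E \<in> carrier_mat n n" using A E by auto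
  fix i j assume i: "i < n" and j: "j < n"
  then show "(A + complex_of_real t \<cdot>\<^sub>m E) $$ (i, j) = cnj ((A + complex_of_real t \<cdot>\<^sub>m E) $$ (j, i))"
    using A E hermitian_index[OF A(2), of i j] hermitian_index[OF E(2), of i j] by simp
qed

lemma hermitian_diag_real: assumes "hermitian L" "k < dim_row L" shows "L $$ (k,k) = complex_of_real (Re (L $$ (k,k)))"
proof -
  have "L $$ (k,k) = cnj (L $$ (k,k))" using hermitian_index[OF assms(1) assms(2) assms(2)] .
  then show ?thesis by (simp add: complex_eq_iff)
qed

lemma hermitian_conj_rdiag: assumes U: "U \<in> carrier_mat n n"
  shows "hermitian (U * rdiag n s * adj U)"
proof -
  have c: "U * rdiag n s \<in> carrier_mat n n" using U by auto
  have "adj (U * rdiag n s * adj U) = adj (adj U) * adj (U * rdiag n s)"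
    by (rule adj_mult[OF c adj_carrier[OF U]])
  also have "adj (U * rdiag n s) = adj (rdiag n s) * adj U" by (rule adj_mult[OF U rdiag_carrier])
  finally have "adj (U * rdiag n s * adj U) = U * rdiag n s * adj U"
    using U by (simp add: assoc_mult_square[of _ n])
  then show ?thesis using U unfolding hermitian_def by auto
qed

section \<open>Spectral decomposition of Hermitian matrices\<close>

definition spectral_decomp :: "nat \<Rightarrow> complex mat \<Rightarrow> complex mat \<Rightarrow> (nat \<Rightarrow> real) \<Rightarrow> bool" where
  "spectral_decomp n A U s \<longleftrightarrow> U \<in> carrier_mat n n \<and> unitary U \<and> A = U * rdiag n s * adj U"

lemma spectral_decompD: assumes "spectral_decomp n A U s"
  shows "U \<in> carrier_mat n n" "unitary U" "A = U * rdiag n s * adj U" "A \<in> carrier_mat n n"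
  using assms by (auto simp: spectral_decomp_def)

definition normalize_cols :: "nat \<Rightarrow> complex vec list \<Rightarrow> complex mat" where
  "normalize_cols m ws = mat m m (\<lambda>(i,j). (ws ! j) $ i / complex_of_real (sqrt (Re ((ws ! j) \<bullet>c (ws ! j)))))"

lemma unitary_normalize_cols:
  assumes ws: "set ws \<subseteq> carrier_vec m" "corthogonal ws" "length ws = m"
  shows "normalize_cols m ws \<in> carrier_mat m m" "unitary (normalize_cols m ws)"
proof -
  define nr where "nr = (\<lambda>j. sqrt (Re ((ws ! j) \<bullet>c (ws ! j))))"
  let ?W = "normalize_cols m ws"
  have wsc: "\<And>j. j < m \<Longrightarrow> ws ! j \<in> carrier_vec m" using ws by auto
  have pos: "(ws ! j) \<bullet>c (ws ! j) > 0" if j: "j < m" for j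
  proof -
    have "(ws ! j) \<bullet>c (ws ! j) \<noteq> 0" using corthogonalD[OF ws(2), of j j] j ws(3) by auto
    moreover have "(ws ! j) \<bullet>c (ws ! j) \<ge> 0" by auto
    ultimately show ?thesis by auto
  qed
  have nrsq: "complex_of_real (nr j) * complex_of_real (nr j) = (ws ! j) \<bullet>c (ws ! j)" if j: "j < m" for j
  proof -
    from pos[OF j] have "Im ((ws ! j) \<bullet>c (ws ! j)) = 0" "Re ((ws ! j) \<bullet>c (ws ! j)) > 0"
      by (auto simp: less_complex_def)
    then show ?thesis unfolding nr_def by (simp add: complex_eq_iff flip: of_real_mult)
  qed
  show W: "?W \<in> carrier_mat m m" unfolding normalize_cols_def by auto
  have "adj ?W * ?W = 1\<^sub>m m"
  proof (rule eq_matI)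
    fix i j assume "i < dim_row (1\<^sub>m m)" "j < dim_col (1\<^sub>m m)"
    then have i: "i < m" and j: "j < m" by auto
    have "(adj ?W * ?W) $$ (i,j) = (\<Sum>k\<in>{0..<m}. cnj ((ws ! i) $ k) * (ws ! j) $ k) / (complex_of_real (nr i) * complex_of_real (nr j))"
      using i j W by (auto simp: scalar_prod_def normalize_cols_def nr_def sum_divide_distrib intro!: sum.cong)
    also have "(\<Sum>k\<in>{0..<m}. cnj ((ws ! i) $ k) * (ws ! j) $ k) = (ws ! j) \<bullet>c (ws ! i)"
      using wsc[OF i] wsc[OF j] by (auto simp: scalar_prod_def mult.commute intro!: sum.cong)
    finally have eq: "(adj ?W * ?W) $$ (i,j) = (ws ! j) \<bullet>c (ws ! i) / (complex_of_real (nr i) * complex_of_real (nr j))" .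
    show "(adj ?W * ?W) $$ (i,j) = 1\<^sub>m m $$ (i,j)"
    proof (cases "i = j")
      case True
      then show ?thesis using eq nrsq[OF i] pos[OF i] i by auto
    next
      case False
      then have "(ws ! j) \<bullet>c (ws ! i) = 0" using corthogonalD[OF ws(2), of j i] i j ws(3) by auto
      then show ?thesis using eq False i j by auto
    qed
  qed (use W in auto)
  then show "unitary ?W" using W by (auto simp: unitary_def)
qed

lemma unitary_with_eigenvector_col0: assumes A: "A \<in> carrier_mat m m" and m: "0 < m"
  shows "\<exists>W e. W \<in> carrier_mat m m \<and> unitary W \<and> (\<forall>i<m. (A * W) $$ (i,0) = e * W $$ (i,0))"
proof -
  obtain as where cp: "char_poly A = (\<Prod>a\<leftarrow>as. [:-a,1:])" and len: "length as = m"
    using char_poly_factorized[OF A] by blast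
  then obtain e rest where as: "as = e # rest" using m by (cases as) auto
  have "poly (char_poly A) e = 0" by (simp add: cp as)
  then have "eigenvalue A e" using eigenvalue_root_char_poly[OF A] by simp
  then obtain v where ev: "eigenvector A v e" by (auto simp: eigenvalue_def)
  then have v: "v \<in> carrier_vec m" "v \<noteq> 0\<^sub>v m" and Av: "A *\<^sub>v v = e \<cdot>\<^sub>v v" using A by (auto simp: eigenvector_def)
  interpret cof_vec_space m "TYPE(complex)" .
  define b where "b = basis_completion v"
  from basis_completion[OF v(1) v(2), folded b_def]
  have dist_b: "distinct b" and indep: "\<not> lin_dep (set b)" and bc: "set b \<subseteq> carrier_vec m"
    and len_b: "length b = m" and hdb: "hd b = v" by auto
  from hdb len_b m obtain vs where bv: "b = v # vs" by (cases b, auto)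
  define ws where "ws = gram_schmidt m b"
  from gram_schmidt_result[OF bc dist_b indep refl, folded ws_def]
  have ws: "set ws \<subseteq> carrier_vec m" "corthogonal ws" "length ws = m" by (auto simp: len_b)
  from gram_schmidt_hd[OF v(1), of vs, folded bv] have "hd ws = v" unfolding ws_def .
  then have ws0: "ws ! 0 = v" using m ws(3) by (cases ws) auto
  let ?W = "normalize_cols m ws"
  have "(A * ?W) $$ (i,0) = e * ?W $$ (i,0)" if i: "i < m" for i
  proof -
    have "(A * ?W) $$ (i,0) = (\<Sum>k\<in>{0..<m}. A $$ (i,k) * v $ k) / complex_of_real (sqrt (Re (v \<bullet>c v)))"
      using i A m ws0 by (auto simp: scalar_prod_def normalize_cols_def sum_divide_distrib intro!: sum.cong)
    also have "(\<Sum>k\<in>{0..<m}. A $$ (i,k) * v $ k) = (A *\<^sub>v v) $ i"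
      using i A v by (auto simp: scalar_prod_def)
    also have "\<dots> = e * v $ i" using Av i v by simp
    finally show ?thesis using i m ws0 by (simp add: normalize_cols_def)
  qed
  then show ?thesis using unitary_normalize_cols[OF ws] by blast
qed

definition lower_right_block :: "complex mat \<Rightarrow> complex mat" where
  "lower_right_block A = mat (dim_row A - 1) (dim_col A - 1) (\<lambda>(i,j). A $$ (Suc i, Suc j))"

definition one_block_diag :: "complex mat \<Rightarrow> complex mat" where
  "one_block_diag U = mat (Suc (dim_row U)) (Suc (dim_col U))
     (\<lambda>(i,j). if i = 0 \<and> j = 0 then 1 else if i = 0 \<or> j = 0 then 0 else U $$ (i - 1, j - 1))"

lemma lower_right_block_carrier:
  "A \<in> carrier_mat (Suc n) (Suc n) \<Longrightarrow> lower_right_block A \<in> carrier_mat n n"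
  by (simp add: lower_right_block_def)

lemma hermitian_lower_right_block:
  assumes "A \<in> carrier_mat (Suc n) (Suc n)" "hermitian A"
  shows "hermitian (lower_right_block A)"
proof (rule hermitianI[OF lower_right_block_carrier[OF assms(1)]])
  fix i j assume "i < n" "j < n"
  then show "lower_right_block A $$ (i,j) = cnj (lower_right_block A $$ (j,i))"
    using hermitian_index[OF assms(2), of "Suc i" "Suc j"] assms(1) by (simp add: lower_right_block_def)
qed

lemma unitary_one_block_diag:
  assumes U: "U \<in> carrier_mat n n" "unitary U"
  shows "one_block_diag U \<in> carrier_mat (Suc n) (Suc n)" "unitary (one_block_diag U)"
proof -
  let ?U = "one_block_diag U"
  show U': "?U \<in> carrier_mat (Suc n) (Suc n)" using U by (simp add: one_block_diag_def)
  have "adj ?U * ?U = 1\<^sub>m (Suc n)"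
  proof (rule eq_matI)
    fix i j assume "i < dim_row (1\<^sub>m (Suc n))" "j < dim_col (1\<^sub>m (Suc n))"
    then have i: "i < Suc n" and j: "j < Suc n" by auto
    have "(adj ?U * ?U) $$ (i,j) = (\<Sum>k<Suc n. cnj (?U $$ (k,i)) * ?U $$ (k,j))"
      using i j U' by (simp add: scalar_prod_def atLeast0LessThan)
    also have "\<dots> = cnj (?U $$ (0,i)) * ?U $$ (0,j) + (\<Sum>k<n. cnj (?U $$ (Suc k,i)) * ?U $$ (Suc k,j))"
      by (rule sum.lessThan_Suc_shift)
    finally have eq: "(adj ?U * ?U) $$ (i,j) = \<dots>" .
    show "(adj ?U * ?U) $$ (i,j) = 1\<^sub>m (Suc n) $$ (i,j)"
    proof (cases "i = 0 \<or> j = 0")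
      case True
      then show ?thesis using eq i j U by (auto simp: one_block_diag_def)
    next
      case False
      then obtain i' j' where ij: "i = Suc i'" "j = Suc j'" by (cases i; cases j) auto
      have "(\<Sum>k<n. cnj (?U $$ (Suc k,i)) * ?U $$ (Suc k,j)) = (\<Sum>k<n. cnj (U $$ (k,i')) * U $$ (k,j'))"
        using i j ij U by (intro sum.cong) (auto simp: one_block_diag_def)
      also have "\<dots> = (adj U * U) $$ (i',j')"
        using i j ij U by (simp add: scalar_prod_def atLeast0LessThan)
      finally show ?thesis using eq i j ij U unitary_adj_mult[OF U] by (simp add: one_block_diag_def)
    qed
  qed (use U' in auto)
  then show "unitary ?U" using U' by (simp add: unitary_def)
qed

lemma spectral_decomp_unitary_conj:
  assumes W: "W \<in> carrier_mat n n" "unitary W" and A: "A \<in> carrier_mat n n"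
    and d: "spectral_decomp n (adj W * A * W) U s"
  shows "spectral_decomp n A (W * U) s"
proof -
  have U: "U \<in> carrier_mat n n" "unitary U" and eq: "adj W * A * W = U * rdiag n s * adj U"
    using d by (auto simp: spectral_decomp_def)
  have "W * U * rdiag n s * adj (W * U) = W * (U * rdiag n s * adj U) * adj W"
    using W U by (simp add: adj_mult[of _ n n _ n] assoc_mult_square[of _ n])
  also have "\<dots> = W * adj W * A * (W * adj W)"
    unfolding eq[symmetric] using W A by (simp add: assoc_mult_square[of _ n])
  also have "\<dots> = A" using unitary_mult_adj[OF W] A by simp
  finally show ?thesis
    using W U unitary_mult[OF W U] by (simp add: spectral_decomp_def)
qed

text \<open>A Hermitian matrix whose first column is \<open>e\<close> times the first unit
  vector is block diagonal, so it is diagonalised by diagonalising its lower right block.\<close>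

lemma spectral_decomp_deflate:
  assumes A: "A \<in> carrier_mat (Suc n) (Suc n)" "hermitian A"
    and col0: "\<And>i. i < Suc n \<Longrightarrow> A $$ (i,0) = (if i = 0 then e else 0)"
    and d: "spectral_decomp n (lower_right_block A) U s"
  shows "spectral_decomp (Suc n) A (one_block_diag U) (\<lambda>k. if k = 0 then Re e else s (k - 1))"
proof -
  let ?U = "one_block_diag U" and ?s = "\<lambda>k. if k = 0 then Re e else s (k - 1)"
  have U: "U \<in> carrier_mat n n" "unitary U" and Aeq: "lower_right_block A = U * rdiag n s * adj U"
    using d by (auto simp: spectral_decomp_def)
  note U' = unitary_one_block_diag[OF U]
  have row0: "A $$ (0,j) = (if j = 0 then e else 0)" if j: "j < Suc n" for j
    using hermitian_index[OF A(2), of 0 j] col0[OF j] A j by (auto simp: col0)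
  have e_real: "e = complex_of_real (Re e)"
    using hermitian_index[OF A(2), of 0 0] col0[of 0] A by (simp add: complex_eq_iff)
  have "A = ?U * rdiag (Suc n) ?s * adj ?U"
  proof (rule eq_matI)
    fix i j assume "i < dim_row (?U * rdiag (Suc n) ?s * adj ?U)" "j < dim_col (?U * rdiag (Suc n) ?s * adj ?U)"
    then have i: "i < Suc n" and j: "j < Suc n" using U' by auto
    have "(?U * rdiag (Suc n) ?s * adj ?U) $$ (i,j) = (\<Sum>k<Suc n. ?U $$ (i,k) * ?s k * cnj (?U $$ (j,k)))"
      by (rule index_conj_rdiag[OF U'(1) i j])
    also have "\<dots> = ?U $$ (i,0) * ?s 0 * cnj (?U $$ (j,0)) + (\<Sum>k<n. ?U $$ (i,Suc k) * ?s (Suc k) * cnj (?U $$ (j,Suc k)))"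
      by (rule sum.lessThan_Suc_shift)
    finally have eq: "(?U * rdiag (Suc n) ?s * adj ?U) $$ (i,j) = \<dots>" .
    show "A $$ (i,j) = (?U * rdiag (Suc n) ?s * adj ?U) $$ (i,j)"
    proof (cases "i = 0 \<or> j = 0")
      case True
      then show ?thesis using eq i j row0[OF j] col0[OF i] e_real U by (auto simp: one_block_diag_def)
    next
      case False
      then obtain i' j' where ij: "i = Suc i'" "j = Suc j'" by (cases i; cases j) auto
      have "(\<Sum>k<n. ?U $$ (i,Suc k) * ?s (Suc k) * cnj (?U $$ (j,Suc k))) = (\<Sum>k<n. U $$ (i',k) * s k * cnj (U $$ (j',k)))"
        using i j ij U by (intro sum.cong) (auto simp: one_block_diag_def)
      also have "\<dots> = lower_right_block A $$ (i',j')"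
        using i j ij U Aeq index_conj_rdiag[OF U(1), of i' j' s] by simp
      also have "\<dots> = A $$ (i,j)" using i j ij A by (simp add: lower_right_block_def)
      finally show ?thesis using eq i j ij U by (simp add: one_block_diag_def)
    qed
  qed (use A U' in auto)
  then show ?thesis using U' by (simp add: spectral_decomp_def)
qed

lemma adj_conj_eigenvector_col0:
  assumes A: "A \<in> carrier_mat n n" and W: "W \<in> carrier_mat n n" "unitary W"
    and eig: "\<And>i. i < n \<Longrightarrow> (A * W) $$ (i,0) = e * W $$ (i,0)" and i: "i < n"
  shows "(adj W * A * W) $$ (i,0) = (if i = 0 then e else 0)"
proof -
  have "(adj W * A * W) $$ (i,0) = (\<Sum>k\<in>{0..<n}. adj W $$ (i,k) * (A * W) $$ (k,0))"
    using i A W by (simp add: assoc_mult_square[of _ n] scalar_prod_def)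
  also have "\<dots> = e * (\<Sum>k\<in>{0..<n}. adj W $$ (i,k) * W $$ (k,0))"
    unfolding sum_distrib_left by (rule sum.cong) (use eig in auto)
  also have "(\<Sum>k\<in>{0..<n}. adj W $$ (i,k) * W $$ (k,0)) = (adj W * W) $$ (i,0)"
    using i W by (simp add: scalar_prod_def)
  finally show ?thesis using unitary_adj_mult[OF W] i by simp
qed

theorem hermitian_spectral_decomp: assumes "A \<in> carrier_mat n n" "hermitian A"
  shows "\<exists>U s. spectral_decomp n A U s"
  using assms
proof (induction n arbitrary: A)
  case 0
  then show ?case unfolding spectral_decomp_def
    by (intro exI[of _ "1\<^sub>m 0"]) (auto simp: unitary_def intro!: eq_matI)
next
  case (Suc n)
  note A = Suc.prems
  obtain W e where W: "W \<in> carrier_mat (Suc n) (Suc n)" "unitary W"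
    and eig: "\<forall>i<Suc n. (A * W) $$ (i,0) = e * W $$ (i,0)"
    using unitary_with_eigenvector_col0[OF A(1)] by blast
  let ?A = "adj W * A * W"
  have A': "?A \<in> carrier_mat (Suc n) (Suc n)" "hermitian ?A"
    using A W hermitian_adj_conj[OF A W(1)] by auto
  obtain U s where "spectral_decomp n (lower_right_block ?A) U s"
    using Suc.IH[OF lower_right_block_carrier hermitian_lower_right_block] A' by blast
  then have "spectral_decomp (Suc n) ?A (one_block_diag U) (\<lambda>k. if k = 0 then Re e else s (k - 1))"
    using spectral_decomp_deflate[OF A'] adj_conj_eigenvector_col0[OF A(1) W] eig by blast
  then show ?case using spectral_decomp_unitary_conj[OF W A(1)] by blast
qed

lemma spectral_decomp_fun_unique: assumes dU: "spectral_decomp n A U s" and dV: "spectral_decomp n A V t"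
  shows "U * rdiag n (f \<circ> s) * adj U = V * rdiag n (f \<circ> t) * adj V"
proof -
  from dU have U: "U \<in> carrier_mat n n" and uU: "unitary U" and AU: "A = U * rdiag n s * adj U"
    by (auto simp: spectral_decomp_def)
  from dV have V: "V \<in> carrier_mat n n" and uV: "unitary V" and AV: "A = V * rdiag n t * adj V"
    by (auto simp: spectral_decomp_def)
  define M where "M = adj V * U"
  have M: "M \<in> carrier_mat n n" unfolding M_def using U V by auto
  have aU: "adj U \<in> carrier_mat n n" and aV: "adj V \<in> carrier_mat n n" using U V by auto
  have "rdiag n t * M = adj V * (V * rdiag n t * adj V) * U"
    unfolding M_def using U V aU aV uV by (simp add: assoc_mult_square[of _ n] unitary_adj_mult_cancel[OF V uV, of _ n])
  also have "\<dots> = adj V * (U * rdiag n s * adj U) * U" using AU AV by simp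
  also have "\<dots> = M * rdiag n s"
    unfolding M_def using U V aU aV uU by (simp add: assoc_mult_square[of _ n] unitary_adj_mult_cancel[OF U uU, of _ n] unitary_adj_mult[OF U uU])
  finally have comm: "rdiag n t * M = M * rdiag n s" .
  have commf: "rdiag n (f \<circ> t) * M = M * rdiag n (f \<circ> s)"
  proof (rule eq_matI)
    fix i j assume "i < dim_row (M * rdiag n (f \<circ> s))" "j < dim_col (M * rdiag n (f \<circ> s))"
    then have i: "i < n" and j: "j < n" using M by auto
    have "(rdiag n t * M) $$ (i,j) = (M * rdiag n s) $$ (i,j)" using comm by simp
    then have "t i * M $$ (i,j) = M $$ (i,j) * s j"
      using index_rdiag_mult[OF M i j] index_mult_rdiag[OF M i j] by simp
    then have "M $$ (i,j) = 0 \<or> t i = s j" by (auto simp: algebra_simps)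
    then have "f (t i) * M $$ (i,j) = M $$ (i,j) * f (s j)" by auto
    then show "(rdiag n (f \<circ> t) * M) $$ (i,j) = (M * rdiag n (f \<circ> s)) $$ (i,j)"
      using index_rdiag_mult[OF M i j] index_mult_rdiag[OF M i j] by simp
  qed (use M in auto)
  have MaU: "M * adj U = adj V"
    unfolding M_def using U V aU aV by (simp add: assoc_mult_square[of _ n] unitary_mult_adj_cancel[OF U uU, of _ n] unitary_mult_adj[OF U uU])
  have "V * rdiag n (f \<circ> t) * adj V = V * (rdiag n (f \<circ> t) * M) * adj U"
    unfolding MaU[symmetric] using V M aU by (simp add: assoc_mult_square[of _ n])
  also have "\<dots> = V * M * rdiag n (f \<circ> s) * adj U"
    unfolding commf using V M aU by (simp add: assoc_mult_square[of _ n])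
  also have "\<dots> = U * rdiag n (f \<circ> s) * adj U"
    unfolding M_def using U V aU aV by (simp add: assoc_mult_square[of _ n] unitary_mult_adj_cancel[OF V uV, of _ n] unitary_mult_adj[OF V uV])
  finally show ?thesis by simp
qed

lemma mat_fun_spectral_decomp: assumes d: "spectral_decomp n A U s"
  shows "mat_fun f A = U * rdiag n (f \<circ> s) * adj U"
proof -
  have dim: "dim_row A = n" using spectral_decompD(4)[OF d] by auto
  let ?P = "\<lambda>B. \<exists>U s. U \<in> carrier_mat (dim_row A) (dim_row A) \<and> unitary U \<and>
      A = U * rdiag (dim_row A) s * adj U \<and> B = U * rdiag (dim_row A) (f \<circ> s) * adj U"
  have "?P (U * rdiag n (f \<circ> s) * adj U)" using d dim by (auto simp: spectral_decomp_def)
  then have "?P (SOME B. ?P B)" by (rule someI)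
  then obtain V t where "spectral_decomp n A V t" and eq: "(SOME B. ?P B) = V * rdiag n (f \<circ> t) * adj V"
    using dim by (auto simp: spectral_decomp_def)
  then show ?thesis unfolding mat_fun_def using spectral_decomp_fun_unique[OF d, of V t f] by simp
qed

lemma mat_fun_hermitian: assumes "A \<in> carrier_mat n n" "hermitian A"
  shows "mat_fun f A \<in> carrier_mat n n" "hermitian (mat_fun f A)"
proof -
  obtain U p where dA: "spectral_decomp n A U p" using hermitian_spectral_decomp[OF assms] by blast
  show "mat_fun f A \<in> carrier_mat n n" unfolding mat_fun_spectral_decomp[OF dA] using spectral_decompD(1)[OF dA] by auto
  show "hermitian (mat_fun f A)" unfolding mat_fun_spectral_decomp[OF dA] by (rule hermitian_conj_rdiag[OF spectral_decompD(1)[OF dA]])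
qed

lemma conj_rdiag_shift: assumes U: "U \<in> carrier_mat n n" "unitary U"
  shows "U * rdiag n (\<lambda>j. f j - c) * adj U = U * rdiag n f * adj U - complex_of_real c \<cdot>\<^sub>m 1\<^sub>m n"
proof (rule eq_matI)
  fix i j assume "i < dim_row (U * rdiag n f * adj U - complex_of_real c \<cdot>\<^sub>m 1\<^sub>m n)"
    "j < dim_col (U * rdiag n f * adj U - complex_of_real c \<cdot>\<^sub>m 1\<^sub>m n)"
  then have i: "i < n" and j: "j < n" by auto
  have "(\<Sum>k<n. U $$ (i,k) * cnj (U $$ (j,k))) = (U * adj U) $$ (i,j)"
    using U i j by (simp add: scalar_prod_def atLeast0LessThan)
  also have "\<dots> = (if i = j then 1 else 0)" using unitary_mult_adj[OF U] i j by simp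
  finally have uu: "(\<Sum>k<n. U $$ (i,k) * cnj (U $$ (j,k))) = (if i = j then 1 else 0)" .
  have "(U * rdiag n (\<lambda>j. f j - c) * adj U) $$ (i,j) = (\<Sum>k<n. U $$ (i,k) * complex_of_real (f k - c) * cnj (U $$ (j,k)))"
    by (rule index_conj_rdiag[OF U(1) i j])
  also have "\<dots> = (\<Sum>k<n. U $$ (i,k) * complex_of_real (f k) * cnj (U $$ (j,k))) - complex_of_real c * (\<Sum>k<n. U $$ (i,k) * cnj (U $$ (j,k)))"
    by (simp add: sum_distrib_left sum_subtractf[symmetric] algebra_simps)
  also have "\<dots> = (U * rdiag n f * adj U - complex_of_real c \<cdot>\<^sub>m 1\<^sub>m n) $$ (i,j)"
    unfolding uu using i j U by (simp add: index_conj_rdiag[OF U(1) i j])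
  finally show "(U * rdiag n (\<lambda>j. f j - c) * adj U) $$ (i,j) = (U * rdiag n f * adj U - complex_of_real c \<cdot>\<^sub>m 1\<^sub>m n) $$ (i,j)" .
qed (use U in auto)

lemma conj_rdiag_scale: assumes U: "U \<in> carrier_mat n n"
  shows "U * rdiag n (\<lambda>j. c * f j) * adj U = complex_of_real c \<cdot>\<^sub>m (U * rdiag n f * adj U)"
proof (rule eq_matI)
  fix i j assume "i < dim_row (complex_of_real c \<cdot>\<^sub>m (U * rdiag n f * adj U))"
    "j < dim_col (complex_of_real c \<cdot>\<^sub>m (U * rdiag n f * adj U))"
  then have i: "i < n" and j: "j < n" using U by auto
  show "(U * rdiag n (\<lambda>j. c * f j) * adj U) $$ (i,j) = (complex_of_real c \<cdot>\<^sub>m (U * rdiag n f * adj U)) $$ (i,j)"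
    using i j U by (simp add: index_conj_rdiag[OF U i j] sum_distrib_left algebra_simps)
qed (use U in auto)

lemma mat_fun_minus_const:
  assumes dA: "spectral_decomp n A U p"
  shows "mat_fun (\<lambda>x. f x - c) A = mat_fun f A - complex_of_real c \<cdot>\<^sub>m 1\<^sub>m n"
  using conj_rdiag_shift[OF spectral_decompD(1,2)[OF dA], of "f \<circ> p" c]
  by (simp add: mat_fun_spectral_decomp[OF dA] comp_def)

lemma mult_mat_fun_ln: assumes A: "A \<in> carrier_mat n n" "hermitian A"
  shows "A * mat_fun ln A = mat_fun (\<lambda>x. x * ln x) A"
proof -
  obtain U p where dA: "spectral_decomp n A U p" using hermitian_spectral_decomp[OF A] by blast
  note U = spectral_decompD(1,2)[OF dA]
  have "A * mat_fun ln A = U * rdiag n p * adj U * (U * rdiag n (ln \<circ> p) * adj U)"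
    by (subst spectral_decompD(3)[OF dA]) (simp add: mat_fun_spectral_decomp[OF dA])
  also have "\<dots> = U * (rdiag n p * rdiag n (ln \<circ> p)) * adj U"
    using U by (simp add: assoc_mult_square[of _ n] unitary_adj_mult_cancel[OF U, of _ n])
  also have "\<dots> = mat_fun (\<lambda>x. x * ln x) A"
    by (simp add: rdiag_mult_rdiag mat_fun_spectral_decomp[OF dA] comp_def)
  finally show ?thesis .
qed

lemma mtrace_mult_comm: assumes "A \<in> carrier_mat n m" "B \<in> carrier_mat m n"
  shows "mtrace (A * B) = mtrace (B * A)"
proof -
  have "mtrace (A * B) = (\<Sum>i<n. \<Sum>k<m. A $$ (i,k) * B $$ (k,i))"
    unfolding mtrace_def using assms by (simp add: scalar_prod_def atLeast0LessThan)
  also have "\<dots> = (\<Sum>k<m. \<Sum>i<n. B $$ (k,i) * A $$ (i,k))"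
    by (subst sum.swap) (simp add: mult.commute)
  also have "\<dots> = mtrace (B * A)"
    unfolding mtrace_def using assms by (simp add: scalar_prod_def atLeast0LessThan)
  finally show ?thesis .
qed

lemma mtrace_add: "A \<in> carrier_mat n n \<Longrightarrow> B \<in> carrier_mat n n \<Longrightarrow> mtrace (A + B) = mtrace A + mtrace B"
  unfolding mtrace_def by (simp add: sum.distrib)

lemma mtrace_minus: "A \<in> carrier_mat n n \<Longrightarrow> B \<in> carrier_mat n n \<Longrightarrow> mtrace (A - B) = mtrace A - mtrace B"
  unfolding mtrace_def by (simp add: sum_subtractf)

lemma mtrace_smult: "A \<in> carrier_mat n n \<Longrightarrow> mtrace (c \<cdot>\<^sub>m A) = c * mtrace A"
  unfolding mtrace_def by (simp add: sum_distrib_left)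

lemma mtrace_rdiag_mult: assumes "X \<in> carrier_mat n n"
  shows "mtrace (rdiag n g * X) = (\<Sum>i<n. g i * X $$ (i,i))"
proof -
  have "dim_row (rdiag n g * X) = n" by simp
  then show ?thesis
    unfolding mtrace_def using assms by (auto simp: index_rdiag_mult[OF assms] simp del: index_mult_mat intro!: sum.cong)
qed

lemma mtrace_rdiag: "mtrace (rdiag n g) = (\<Sum>i<n. complex_of_real (g i))"
  unfolding mtrace_def by simp

lemma mtrace_conj_rdiag: assumes U: "U \<in> carrier_mat n n" "unitary U"
  shows "mtrace (U * rdiag n g * adj U) = complex_of_real (\<Sum>i<n. g i)"
proof -
  have "mtrace (U * rdiag n g * adj U) = mtrace (U * (rdiag n g * adj U))"
    using U by (simp add: assoc_mult_square[of _ n])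
  also have "\<dots> = mtrace ((rdiag n g * adj U) * U)"
    by (rule mtrace_mult_comm[of _ n n]) (use U in auto)
  also have "(rdiag n g * adj U) * U = rdiag n g"
    using U by (simp add: assoc_mult_square[of _ n] unitary_adj_mult)
  finally show ?thesis by (simp add: mtrace_rdiag)
qed

lemma mtrace_mat_fun_spectral: assumes "spectral_decomp n B V b"
  shows "Re (mtrace (mat_fun \<phi> B)) = (\<Sum>j<n. \<phi> (b j))"
  using mat_fun_spectral_decomp[OF assms] mtrace_conj_rdiag[OF spectral_decompD(1,2)[OF assms]] by simp

text \<open>The weights \<open>|(U\<^sup>H V)\<^sub>i\<^sub>j|\<^sup>2\<close> form a doubly stochastic matrix; traces of products of
  functions of two Hermitian matrices are weighted sums of products of their eigenvalues.\<close>

definition overlap :: "complex mat \<Rightarrow> complex mat \<Rightarrow> nat \<Rightarrow> nat \<Rightarrow> real" where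
  "overlap U V i j = (cmod ((adj U * V) $$ (i,j)))\<^sup>2"

lemma cnj_mult_self: "cnj z * z = complex_of_real ((cmod z)\<^sup>2)"
  by (metis complex_norm_square mult.commute of_real_power)

lemma mult_cnj_self: "z * cnj z = complex_of_real ((cmod z)\<^sup>2)"
  by (metis complex_norm_square of_real_power)

lemma mtrace_conj_rdiag_mult: assumes U: "U \<in> carrier_mat n n" "unitary U" and V: "V \<in> carrier_mat n n" "unitary V"
  shows "mtrace (U * rdiag n g * adj U * (V * rdiag n h * adj V)) =
    complex_of_real (\<Sum>i<n. \<Sum>j<n. g i * h j * overlap U V i j)"
proof -
  define M where "M = adj U * V"
  have M: "M \<in> carrier_mat n n" unfolding M_def using U V by auto
  have aM: "adj M = adj V * U" unfolding M_def using U V by (simp add: adj_mult[of _ n n _ n])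
  have "mtrace (U * rdiag n g * adj U * (V * rdiag n h * adj V)) =
      mtrace (U * (rdiag n g * adj U * V * rdiag n h * adj V))"
    using U V by (simp add: assoc_mult_square[of _ n])
  also have "\<dots> = mtrace ((rdiag n g * adj U * V * rdiag n h * adj V) * U)"
    by (rule mtrace_mult_comm[of _ n n]) (use U V in auto)
  also have "(rdiag n g * adj U * V * rdiag n h * adj V) * U = rdiag n g * (M * rdiag n h * adj M)"
    unfolding aM unfolding M_def using U V by (simp add: assoc_mult_square[of _ n])
  also have "mtrace (rdiag n g * (M * rdiag n h * adj M)) = (\<Sum>i<n. g i * (M * rdiag n h * adj M) $$ (i,i))"
    by (rule mtrace_rdiag_mult) (use M in auto)
  also have "\<dots> = (\<Sum>i<n. g i * (\<Sum>j<n. M $$ (i,j) * h j * cnj (M $$ (i,j))))"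
    by (intro sum.cong refl) (simp add: index_conj_rdiag[OF M])
  also have "\<dots> = complex_of_real (\<Sum>i<n. \<Sum>j<n. g i * h j * overlap U V i j)"
    unfolding overlap_def M_def[symmetric] of_real_sum sum_distrib_left
    by (intro sum.cong refl) (simp add: mult_cnj_self)
  finally show ?thesis .
qed

lemma overlap_nonneg: "overlap U V i j \<ge> 0"
  unfolding overlap_def by simp

lemma overlap_col_sum: assumes U: "U \<in> carrier_mat n n" "unitary U" and V: "V \<in> carrier_mat n n" "unitary V"
  and j: "j < n"
  shows "(\<Sum>i<n. overlap U V i j) = 1"
proof -
  define M where "M = adj U * V"
  have M: "M \<in> carrier_mat n n" unfolding M_def using U V by auto
  have uM: "unitary M" unfolding M_def by (rule unitary_mult[OF _ unitary_adj[OF U]]) (use U V in auto)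
  have "complex_of_real (\<Sum>i<n. overlap U V i j) = (\<Sum>i<n. cnj (M $$ (i,j)) * M $$ (i,j))"
    unfolding overlap_def M_def[symmetric] of_real_sum by (intro sum.cong refl) (simp add: cnj_mult_self)
  also have "\<dots> = (adj M * M) $$ (j,j)"
    using M j by (simp add: scalar_prod_def atLeast0LessThan)
  also have "\<dots> = 1" using unitary_adj_mult[OF M uM] j by simp
  finally show ?thesis by (metis of_real_eq_1_iff)
qed

lemma overlap_row_sum: assumes U: "U \<in> carrier_mat n n" "unitary U" and V: "V \<in> carrier_mat n n" "unitary V"
  and i: "i < n"
  shows "(\<Sum>j<n. overlap U V i j) = 1"
proof -
  define M where "M = adj U * V"
  have M: "M \<in> carrier_mat n n" unfolding M_def using U V by auto
  have uM: "unitary M" unfolding M_def by (rule unitary_mult[OF _ unitary_adj[OF U]]) (use U V in auto)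
  have "complex_of_real (\<Sum>j<n. overlap U V i j) = (\<Sum>j<n. M $$ (i,j) * cnj (M $$ (i,j)))"
    unfolding overlap_def M_def[symmetric] of_real_sum by (intro sum.cong refl) (simp add: mult_cnj_self)
  also have "\<dots> = (M * adj M) $$ (i,i)"
    using M i by (simp add: scalar_prod_def atLeast0LessThan)
  also have "\<dots> = 1" using unitary_mult_adj[OF M uM] i by simp
  finally show ?thesis by (metis of_real_eq_1_iff)
qed

lemma overlap_self: assumes U: "U \<in> carrier_mat n n" "unitary U" and i: "i < n" and j: "j < n"
  shows "overlap U U i j = (if i = j then 1 else 0)"
  unfolding overlap_def using unitary_adj_mult[OF U] i j by simp

lemma mtrace_conj_rdiag_mult_same: assumes U: "U \<in> carrier_mat n n" "unitary U"
  shows "mtrace (U * rdiag n g * adj U * (U * rdiag n h * adj U)) = complex_of_real (\<Sum>i<n. g i * h i)"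
proof -
  have "mtrace (U * rdiag n g * adj U * (U * rdiag n h * adj U)) = complex_of_real (\<Sum>i<n. \<Sum>j<n. g i * h j * overlap U U i j)"
    by (rule mtrace_conj_rdiag_mult[OF U U])
  also have "(\<Sum>i<n. \<Sum>j<n. g i * h j * overlap U U i j) = (\<Sum>i<n. g i * h i)"
    by (intro sum.cong refl) (simp add: overlap_self[OF U] if_distrib[where f="\<lambda>x. _ * x"] sum.delta cong: if_cong)
  finally show ?thesis .
qed

lemma sum_overlap_row_weighted:
  assumes "U \<in> carrier_mat n n" "unitary U" "V \<in> carrier_mat n n" "unitary V"
  shows "(\<Sum>i<n. f i) = (\<Sum>i<n. \<Sum>j<n. overlap U V i j * f i)"
  by (intro sum.cong refl) (simp add: sum_distrib_right[symmetric] overlap_row_sum[OF assms])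

lemma sum_overlap_col_weighted:
  assumes "U \<in> carrier_mat n n" "unitary U" "V \<in> carrier_mat n n" "unitary V"
  shows "(\<Sum>j<n. f j) = (\<Sum>i<n. \<Sum>j<n. overlap U V i j * f j)"
  by (subst sum.swap) (intro sum.cong refl, simp add: sum_distrib_right[symmetric] overlap_col_sum[OF assms])

lemma mtrace_mat_fun_linearization_overlap:
  assumes dA: "spectral_decomp n A U a" and dB: "spectral_decomp n B V b"
  shows "(\<Sum>j<n. \<phi> (b j)) - (\<Sum>i<n. \<phi> (a i)) - Re (mtrace (mat_fun g A * (B - A)))
       = (\<Sum>i<n. \<Sum>j<n. overlap U V i j * (\<phi> (b j) - \<phi> (a i) - g (a i) * (b j - a i)))"
proof -
  note U = spectral_decompD(1,2)[OF dA] and V = spectral_decompD(1,2)[OF dB]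
  have A: "A \<in> carrier_mat n n" and B: "B \<in> carrier_mat n n" using spectral_decompD(4) dA dB by auto
  have gA: "mat_fun g A = U * rdiag n (g \<circ> a) * adj U" by (rule mat_fun_spectral_decomp[OF dA])
  have gAc: "mat_fun g A \<in> carrier_mat n n" unfolding gA using U by auto
  let ?P = "overlap U V"
  have tgB: "mtrace (mat_fun g A * B) = complex_of_real (\<Sum>i<n. \<Sum>j<n. g (a i) * b j * ?P i j)"
    unfolding gA by (subst spectral_decompD(3)[OF dB]) (simp add: mtrace_conj_rdiag_mult[OF U V])
  have tgA: "mtrace (mat_fun g A * A) = complex_of_real (\<Sum>i<n. g (a i) * a i)"
    unfolding gA by (subst spectral_decompD(3)[OF dA]) (simp add: mtrace_conj_rdiag_mult_same[OF U])
  have "mtrace (mat_fun g A * (B - A)) = mtrace (mat_fun g A * B) - mtrace (mat_fun g A * A)"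
    using gAc A B by (simp add: mult_minus_distrib_mat[OF gAc B A] mtrace_minus[of _ n])
  then have "(\<Sum>j<n. \<phi> (b j)) - (\<Sum>i<n. \<phi> (a i)) - Re (mtrace (mat_fun g A * (B - A))) =
       (\<Sum>i<n. \<Sum>j<n. ?P i j * \<phi> (b j)) - (\<Sum>i<n. \<Sum>j<n. ?P i j * \<phi> (a i))
        - ((\<Sum>i<n. \<Sum>j<n. g (a i) * b j * ?P i j) - (\<Sum>i<n. \<Sum>j<n. ?P i j * (g (a i) * a i)))"
    unfolding tgB tgA
    by (simp add: sum_overlap_col_weighted[OF U V, of "\<lambda>j. \<phi> (b j)"]
        sum_overlap_row_weighted[OF U V, of "\<lambda>i. \<phi> (a i)"] sum_overlap_row_weighted[OF U V, of "\<lambda>i. g (a i) * a i"])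
  also have "\<dots> = (\<Sum>i<n. \<Sum>j<n. ?P i j * (\<phi> (b j) - \<phi> (a i) - g (a i) * (b j - a i)))"
    by (simp add: sum_subtractf[symmetric] algebra_simps)
  finally show ?thesis .
qed

lemma mtrace_diff_square_overlap:
  assumes dA: "spectral_decomp n A U a" and dB: "spectral_decomp n B V b"
  shows "Re (mtrace ((B - A) * (B - A))) = (\<Sum>i<n. \<Sum>j<n. overlap U V i j * (b j - a i)\<^sup>2)"
proof -
  note U = spectral_decompD(1,2)[OF dA] and V = spectral_decompD(1,2)[OF dB]
  have A: "A \<in> carrier_mat n n" and B: "B \<in> carrier_mat n n" using spectral_decompD(4) dA dB by auto
  have Aeq: "A = U * rdiag n a * adj U" and Beq: "B = V * rdiag n b * adj V" using spectral_decompD(3) dA dB by auto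
  let ?P = "overlap U V"
  have tAB: "mtrace (A * B) = complex_of_real (\<Sum>i<n. \<Sum>j<n. a i * b j * ?P i j)"
    by (subst Aeq, subst Beq) (simp add: mtrace_conj_rdiag_mult[OF U V])
  have tAA: "mtrace (A * A) = complex_of_real (\<Sum>i<n. a i * a i)"
    by (subst (1 2) Aeq) (simp add: mtrace_conj_rdiag_mult_same[OF U])
  have tBB: "mtrace (B * B) = complex_of_real (\<Sum>i<n. b i * b i)"
    by (subst (1 2) Beq) (simp add: mtrace_conj_rdiag_mult_same[OF V])
  have c: "B * B \<in> carrier_mat n n" "A * B \<in> carrier_mat n n" "B * A \<in> carrier_mat n n" "A * A \<in> carrier_mat n n"
    "B * B - A * B \<in> carrier_mat n n" "B * A - A * A \<in> carrier_mat n n" using A B by auto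
  have "(B - A) * (B - A) = (B * B - A * B) - (B * A - A * A)"
    using A B by (simp add: mult_minus_distrib_mat[OF minus_carrier_mat[OF A] B A] minus_mult_distrib_mat[OF B A])
  then have "mtrace ((B - A) * (B - A)) = (mtrace (B * B) - mtrace (A * B)) - (mtrace (B * A) - mtrace (A * A))"
    by (simp add: mtrace_minus[OF c(5,6)] mtrace_minus[OF c(1,2)] mtrace_minus[OF c(3,4)])
  then have "Re (mtrace ((B - A) * (B - A))) = (\<Sum>i<n. \<Sum>j<n. ?P i j * (b j * b j))
      - 2 * (\<Sum>i<n. \<Sum>j<n. a i * b j * ?P i j) + (\<Sum>i<n. \<Sum>j<n. ?P i j * (a i * a i))"
    unfolding mtrace_mult_comm[OF B A] tAB tAA tBB
    by (simp add: sum_overlap_col_weighted[OF U V, of "\<lambda>j. b j * b j"] sum_overlap_row_weighted[OF U V, of "\<lambda>i. a i * a i"])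
  also have "\<dots> = (\<Sum>i<n. \<Sum>j<n. ?P i j * (b j - a i)\<^sup>2)"
    by (simp add: sum_subtractf[symmetric] sum.distrib[symmetric] sum_distrib_left power2_eq_square algebra_simps)
  finally show ?thesis .
qed

text \<open>Averaging the scalar two-sided bounds with the doubly stochastic weights
  \<open>overlap U V\<close> transfers them to trace functions (Klein's inequality and its converse).\<close>

lemma klein_two_sided:
  assumes dA: "spectral_decomp n A U a" and dB: "spectral_decomp n B V b"
  and H: "\<And>i j. i < n \<Longrightarrow> j < n \<Longrightarrow> 0 \<le> \<phi> (b j) - \<phi> (a i) - g (a i) * (b j - a i) \<and>
      \<phi> (b j) - \<phi> (a i) - g (a i) * (b j - a i) \<le> K * (b j - a i)\<^sup>2"
  shows "0 \<le> (\<Sum>j<n. \<phi> (b j)) - (\<Sum>i<n. \<phi> (a i)) - Re (mtrace (mat_fun g A * (B - A)))"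
   and "(\<Sum>j<n. \<phi> (b j)) - (\<Sum>i<n. \<phi> (a i)) - Re (mtrace (mat_fun g A * (B - A))) \<le> K * Re (mtrace ((B - A) * (B - A)))"
proof -
  have P: "\<And>i j. overlap U V i j \<ge> 0" by (rule overlap_nonneg)
  show "0 \<le> (\<Sum>j<n. \<phi> (b j)) - (\<Sum>i<n. \<phi> (a i)) - Re (mtrace (mat_fun g A * (B - A)))"
    unfolding mtrace_mat_fun_linearization_overlap[OF dA dB] by (intro sum_nonneg) (use H P in auto)
  have "(\<Sum>j<n. \<phi> (b j)) - (\<Sum>i<n. \<phi> (a i)) - Re (mtrace (mat_fun g A * (B - A)))
      \<le> (\<Sum>i<n. \<Sum>j<n. overlap U V i j * (K * (b j - a i)\<^sup>2))"
    unfolding mtrace_mat_fun_linearization_overlap[OF dA dB]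
    by (intro sum_mono mult_left_mono) (use H P in auto)
  also have "\<dots> = K * Re (mtrace ((B - A) * (B - A)))"
    unfolding mtrace_diff_square_overlap[OF dA dB] by (simp add: sum_distrib_left algebra_simps)
  finally show "(\<Sum>j<n. \<phi> (b j)) - (\<Sum>i<n. \<phi> (a i)) - Re (mtrace (mat_fun g A * (B - A))) \<le> K * Re (mtrace ((B - A) * (B - A)))" .
qed

section \<open>First-order perturbation of trace functions\<close>

lemma has_real_derivative_quadratic_error:
  fixes h :: "real \<Rightarrow> real"
  assumes eps: "\<epsilon> > 0" and b: "\<And>t. \<bar>t\<bar> < \<epsilon> \<Longrightarrow> \<bar>h t - h 0 - t * m\<bar> \<le> C * t\<^sup>2"
  shows "(h has_real_derivative m) (at 0)"
proof -
  have "((\<lambda>t. (h t - h 0) / t - m) \<longlongrightarrow> 0) (at 0)"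
  proof (rule tendsto_0_le[where f="\<lambda>t. t" and K="\<bar>C\<bar>"])
    show "((\<lambda>t. t) \<longlongrightarrow> (0::real)) (at 0)" by (rule tendsto_ident_at)
    show "\<forall>\<^sub>F t in at 0. norm ((h t - h 0) / t - m) \<le> norm t * \<bar>C\<bar>"
      unfolding eventually_at
    proof (intro exI[of _ \<epsilon>] conjI ballI impI)
      fix t :: real assume t: "t \<in> UNIV" "t \<noteq> 0 \<and> dist t 0 < \<epsilon>"
      then have t0: "t \<noteq> 0" and te: "\<bar>t\<bar> < \<epsilon>" by auto
      have "(h t - h 0) / t - m = (h t - h 0 - t * m) / t" using t0 by (simp add: field_simps)
      then have "norm ((h t - h 0) / t - m) = \<bar>h t - h 0 - t * m\<bar> / \<bar>t\<bar>" by simp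
      also have "\<dots> \<le> C * t\<^sup>2 / \<bar>t\<bar>" using b[OF te] by (simp add: divide_right_mono)
      also have "\<dots> = C * \<bar>t\<bar>"
        using t0 by (cases "t > 0") (auto simp: power2_eq_square)
      also have "\<dots> \<le> norm t * \<bar>C\<bar>" by (simp add: mult.commute mult_right_mono)
      finally show "norm ((h t - h 0) / t - m) \<le> norm t * \<bar>C\<bar>" .
    qed (use eps in auto)
  qed
  then have "((\<lambda>t. (h t - h 0) / (t - 0)) \<longlongrightarrow> m) (at 0)"
    by (simp add: LIM_zero_cancel)
  then show ?thesis by (simp add: has_field_derivative_iff)
qed

lemma add_zero_smult: assumes "A \<in> carrier_mat n n" "E \<in> carrier_mat n n"
  shows "A + complex_of_real 0 \<cdot>\<^sub>m E = A"
  using assms by (intro eq_matI) auto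

lemma mtrace_mat_fun_has_derivative:
  assumes A: "A \<in> carrier_mat n n" "hermitian A" and E: "E \<in> carrier_mat n n" "hermitian E"
  and eps: "\<epsilon> > 0"
  and kI: "\<And>x y. x \<in> I \<Longrightarrow> y \<in> I \<Longrightarrow> 0 \<le> \<phi> y - \<phi> x - g x * (y - x) \<and> \<phi> y - \<phi> x - g x * (y - x) \<le> K * (y - x)\<^sup>2"
  and specI: "\<And>t U b j. \<bar>t\<bar> < \<epsilon> \<Longrightarrow> spectral_decomp n (A + complex_of_real t \<cdot>\<^sub>m E) U b \<Longrightarrow> j < n \<Longrightarrow> b j \<in> I"
  shows "((\<lambda>t. Re (mtrace (mat_fun \<phi> (A + complex_of_real t \<cdot>\<^sub>m E)))) has_real_derivative Re (mtrace (mat_fun g A * E))) (at 0)"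
proof (rule has_real_derivative_quadratic_error[OF eps])
  fix t :: real assume t: "\<bar>t\<bar> < \<epsilon>"
  define h where "h = (\<lambda>t. Re (mtrace (mat_fun \<phi> (A + complex_of_real t \<cdot>\<^sub>m E))))"
  have A0: "A + complex_of_real 0 \<cdot>\<^sub>m E = A" by (rule add_zero_smult[OF A(1) E(1)])
  obtain U a where dA: "spectral_decomp n A U a" using hermitian_spectral_decomp[OF A] by blast
  have aI: "\<And>i. i < n \<Longrightarrow> a i \<in> I" using specI[of 0 U a] dA eps A0 by auto
  define B where "B = A + complex_of_real t \<cdot>\<^sub>m E"
  have B: "B \<in> carrier_mat n n" unfolding B_def using A E by auto
  obtain V b where dB: "spectral_decomp n B V b" using hermitian_spectral_decomp[OF B] hermitian_add_smult[OF A E] unfolding B_def by blast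
  have bI: "\<And>j. j < n \<Longrightarrow> b j \<in> I" using specI[OF t, of V b] dB unfolding B_def by auto
  have kl: "0 \<le> (\<Sum>j<n. \<phi> (b j)) - (\<Sum>i<n. \<phi> (a i)) - Re (mtrace (mat_fun g A * (B - A)))"
     "(\<Sum>j<n. \<phi> (b j)) - (\<Sum>i<n. \<phi> (a i)) - Re (mtrace (mat_fun g A * (B - A))) \<le> K * Re (mtrace ((B - A) * (B - A)))"
    using klein_two_sided[OF dA dB, of \<phi> g K] kI aI bI by auto
  have BA: "B - A = complex_of_real t \<cdot>\<^sub>m E" unfolding B_def using A E by (intro eq_matI) auto
  have gAc: "mat_fun g A \<in> carrier_mat n n" unfolding mat_fun_spectral_decomp[OF dA] using spectral_decompD[OF dA] by auto
  have EE: "E * E \<in> carrier_mat n n" "mat_fun g A * E \<in> carrier_mat n n" using E gAc by auto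
  have t1: "Re (mtrace (mat_fun g A * (B - A))) = t * Re (mtrace (mat_fun g A * E))"
    unfolding BA by (simp add: mult_smult_distrib[OF gAc E(1)] mtrace_smult[OF EE(2)])
  have t2: "Re (mtrace ((B - A) * (B - A))) = t\<^sup>2 * Re (mtrace (E * E))"
  proof -
    have "(B - A) * (B - A) = complex_of_real t \<cdot>\<^sub>m (complex_of_real t \<cdot>\<^sub>m (E * E))"
      unfolding BA using E by (simp add: mult_smult_distrib[of _ n n _ n] mult_smult_assoc_mat[of _ n n _ n])
    then show ?thesis using EE by (simp add: mtrace_smult[of _ n] power2_eq_square)
  qed
  have h0: "h 0 = (\<Sum>i<n. \<phi> (a i))" unfolding h_def A0 by (rule mtrace_mat_fun_spectral[OF dA])
  have ht: "h t = (\<Sum>j<n. \<phi> (b j))" unfolding h_def B_def[symmetric] by (rule mtrace_mat_fun_spectral[OF dB])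
  have "0 \<le> h t - h 0 - t * Re (mtrace (mat_fun g A * E))"
    "h t - h 0 - t * Re (mtrace (mat_fun g A * E)) \<le> K * Re (mtrace (E * E)) * t\<^sup>2"
    using kl unfolding h0 ht t1 t2 by (auto simp: mult_ac)
  then show "\<bar>h t - h 0 - t * Re (mtrace (mat_fun g A * E))\<bar> \<le> K * Re (mtrace (E * E)) * t\<^sup>2"
    by simp
qed

lemma unitary_col_norm: assumes U: "U \<in> carrier_mat n n" "unitary U" and j: "j < n"
  shows "(\<Sum>k<n. (cmod (U $$ (k,j)))\<^sup>2) = 1"
proof -
  have "complex_of_real (\<Sum>k<n. (cmod (U $$ (k,j)))\<^sup>2) = (\<Sum>k<n. cnj (U $$ (k,j)) * U $$ (k,j))"
    unfolding of_real_sum by (intro sum.cong refl) (simp add: cnj_mult_self)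
  also have "\<dots> = (adj U * U) $$ (j,j)" using U j by (simp add: scalar_prod_def atLeast0LessThan)
  also have "\<dots> = 1" using unitary_adj_mult[OF U] j by simp
  finally show ?thesis by (metis of_real_eq_1_iff)
qed

lemma norm_unitary_entry_le1: assumes U: "U \<in> carrier_mat n n" "unitary U" and k: "k < n" and j: "j < n"
  shows "cmod (U $$ (k,j)) \<le> 1"
proof -
  have "(cmod (U $$ (k,j)))\<^sup>2 \<le> (\<Sum>k<n. (cmod (U $$ (k,j)))\<^sup>2)"
    by (rule member_le_sum) (use k in auto)
  then have "(cmod (U $$ (k,j)))\<^sup>2 \<le> 1" using unitary_col_norm[OF U j] by simp
  then show ?thesis by (simp add: power_le_one_iff abs_le_iff)
qed

lemma index_adj_conj_diag: assumes V: "V \<in> carrier_mat n n" and Y: "Y \<in> carrier_mat n n" and j: "j < n"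
  shows "(adj V * Y * V) $$ (j,j) = (\<Sum>k<n. \<Sum>l<n. cnj (V $$ (k,j)) * Y $$ (k,l) * V $$ (l,j))"
proof -
  have "(adj V * Y * V) $$ (j,j) = (adj V * (Y * V)) $$ (j,j)" using V Y by (simp add: assoc_mult_square[of _ n])
  also have "\<dots> = (\<Sum>k<n. cnj (V $$ (k,j)) * (Y * V) $$ (k,j))"
    using V Y j by (simp add: scalar_prod_def atLeast0LessThan)
  also have "\<dots> = (\<Sum>k<n. \<Sum>l<n. cnj (V $$ (k,j)) * Y $$ (k,l) * V $$ (l,j))"
    using V Y j by (intro sum.cong refl) (simp add: scalar_prod_def atLeast0LessThan sum_distrib_left mult.assoc)
  finally show ?thesis .
qed

lemma norm_index_adj_conj_diag_le:
  assumes V: "V \<in> carrier_mat n n" "unitary V" and Y: "Y \<in> carrier_mat n n" and j: "j < n"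
  shows "cmod ((adj V * Y * V) $$ (j,j)) \<le> (\<Sum>k<n. \<Sum>l<n. cmod (Y $$ (k,l)))"
proof -
  have "cmod ((adj V * Y * V) $$ (j,j)) \<le> (\<Sum>k<n. \<Sum>l<n. cmod (cnj (V $$ (k,j)) * Y $$ (k,l) * V $$ (l,j)))"
    unfolding index_adj_conj_diag[OF V(1) Y j] by (intro order.trans[OF norm_sum] sum_mono norm_sum)
  also have "\<dots> \<le> (\<Sum>k<n. \<Sum>l<n. 1 * cmod (Y $$ (k,l)) * 1)"
    unfolding norm_mult complex_mod_cnj
    by (intro sum_mono mult_mono) (use norm_unitary_entry_le1[OF V] j in auto)
  finally show ?thesis by simp
qed

text \<open>The deviation of \<open>b j\<close> from an average of the \<open>a i\<close> is the \<open>j\<close>-th diagonal entry of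
  \<open>V\<^sup>H (B - A) V\<close>.\<close>

lemma eigenvalue_perturbation: assumes dA: "spectral_decomp n A U a" and dB: "spectral_decomp n B V b" and j: "j < n"
  shows "\<bar>b j - (\<Sum>i<n. overlap V U j i * a i)\<bar> \<le> (\<Sum>k<n. \<Sum>l<n. cmod ((B - A) $$ (k,l)))"
proof -
  note U = spectral_decompD(1,2)[OF dA] and V = spectral_decompD(1,2)[OF dB]
  have A: "A \<in> carrier_mat n n" and B: "B \<in> carrier_mat n n" using spectral_decompD(4) dA dB by auto
  have Aeq: "A = U * rdiag n a * adj U" and Beq: "B = V * rdiag n b * adj V" using spectral_decompD(3) dA dB by auto
  define M where "M = adj V * U"
  have M: "M \<in> carrier_mat n n" unfolding M_def using U V by auto
  have aM: "adj M = adj U * V" unfolding M_def using U V by (simp add: adj_mult[of _ n n _ n])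
  have "adj V * B * V = rdiag n b"
    using U V by (subst Beq) (simp add: assoc_mult_square[of _ n] unitary_adj_mult_cancel[OF V, of _ n] unitary_adj_mult[OF V])
  then have qB: "(adj V * B * V) $$ (j,j) = complex_of_real (b j)" using j by simp
  have "adj V * A * V = M * rdiag n a * adj M"
    unfolding aM unfolding M_def using U V by (subst Aeq) (simp add: assoc_mult_square[of _ n])
  then have "(adj V * A * V) $$ (j,j) = (\<Sum>i<n. M $$ (j,i) * a i * cnj (M $$ (j,i)))"
    using index_conj_rdiag[OF M j j] by simp
  also have "\<dots> = complex_of_real (\<Sum>i<n. overlap V U j i * a i)"
    unfolding overlap_def M_def[symmetric] of_real_sum
    by (intro sum.cong refl) (simp add: mult.commute mult.left_commute mult_cnj_self)
  finally have qA: "(adj V * A * V) $$ (j,j) = complex_of_real (\<Sum>i<n. overlap V U j i * a i)" .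
  have X: "B - A \<in> carrier_mat n n" using A B by auto
  have "(adj V * B * V) $$ (j,j) = (adj V * A * V) $$ (j,j) + (adj V * (B - A) * V) $$ (j,j)"
    unfolding index_adj_conj_diag[OF V(1) B j] index_adj_conj_diag[OF V(1) A j] index_adj_conj_diag[OF V(1) X j]
    using A B by (simp add: sum.distrib[symmetric] algebra_simps)
  then have "complex_of_real (b j - (\<Sum>i<n. overlap V U j i * a i)) = (adj V * (B - A) * V) $$ (j,j)"
    unfolding qA qB by simp
  then show ?thesis using norm_index_adj_conj_diag_le[OF V X j] by (metis norm_of_real)
qed

lemma eigenvalue_perturbation_smult:
  assumes dA: "spectral_decomp n A U p" and E: "E \<in> carrier_mat n n"
    and dB: "spectral_decomp n (A + complex_of_real t \<cdot>\<^sub>m E) V b" and j: "j < n"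
  shows "\<bar>b j - (\<Sum>i<n. overlap V U j i * p i)\<bar> \<le> \<bar>t\<bar> * (\<Sum>k<n. \<Sum>l<n. cmod (E $$ (k,l)))"
proof -
  have "A + complex_of_real t \<cdot>\<^sub>m E - A = complex_of_real t \<cdot>\<^sub>m E"
    using spectral_decompD(4)[OF dA] E by (intro eq_matI) auto
  then show ?thesis
    using eigenvalue_perturbation[OF dA dB j] E by (simp add: sum_distrib_left norm_mult)
qed

lemma overlap_average_bounds:
  assumes V: "V \<in> carrier_mat n n" "unitary V" and U: "U \<in> carrier_mat n n" "unitary U"
    and j: "j < n" and p: "\<forall>i<n. lo \<le> p i \<and> p i \<le> hi"
  shows "lo \<le> (\<Sum>i<n. overlap V U j i * p i)" "(\<Sum>i<n. overlap V U j i * p i) \<le> hi"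
proof -
  have row: "(\<Sum>i<n. overlap V U j i) = 1" by (rule overlap_row_sum[OF V U j])
  have "lo = (\<Sum>i<n. overlap V U j i * lo)" using row by (simp add: sum_distrib_right[symmetric])
  also have "\<dots> \<le> (\<Sum>i<n. overlap V U j i * p i)"
    using p by (intro sum_mono mult_left_mono) (auto simp: overlap_nonneg)
  finally show "lo \<le> (\<Sum>i<n. overlap V U j i * p i)" .
  have "(\<Sum>i<n. overlap V U j i * p i) \<le> (\<Sum>i<n. overlap V U j i * hi)"
    using p by (intro sum_mono mult_left_mono) (auto simp: overlap_nonneg)
  also have "\<dots> = hi" using row by (simp add: sum_distrib_right[symmetric])
  finally show "(\<Sum>i<n. overlap V U j i * p i) \<le> hi" .
qed

lemma eigenvalues_smult_perturbation_bounds: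
  assumes dA: "spectral_decomp n A U p" and E: "E \<in> carrier_mat n n" and \<delta>: "\<delta> > 0"
    and p: "\<forall>i<n. lo \<le> p i \<and> p i \<le> hi"
  obtains \<epsilon> where "\<epsilon> > 0"
    "\<And>t V b j. \<bar>t\<bar> < \<epsilon> \<Longrightarrow> spectral_decomp n (A + complex_of_real t \<cdot>\<^sub>m E) V b \<Longrightarrow> j < n
       \<Longrightarrow> lo - \<delta> \<le> b j \<and> b j \<le> hi + \<delta>"
proof
  define SE where "SE = (\<Sum>k<n. \<Sum>l<n. cmod (E $$ (k,l)))"
  have SE: "SE \<ge> 0" unfolding SE_def by (intro sum_nonneg) auto
  show "\<delta> / (SE + 1) > 0" using \<delta> SE by auto
  fix t V b j assume t: "\<bar>t\<bar> < \<delta> / (SE + 1)"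
    and dB: "spectral_decomp n (A + complex_of_real t \<cdot>\<^sub>m E) V b" and j: "j < n"
  have "\<bar>t\<bar> * SE \<le> \<delta> / (SE + 1) * (SE + 1)"
    using t SE by (intro mult_mono) auto
  then have "\<bar>t\<bar> * SE \<le> \<delta>" using SE by simp
  then show "lo - \<delta> \<le> b j \<and> b j \<le> hi + \<delta>"
    using eigenvalue_perturbation_smult[OF dA E dB j, folded SE_def]
      overlap_average_bounds[OF spectral_decompD(1,2)[OF dB] spectral_decompD(1,2)[OF dA] j p]
    by linarith
qed

lemma xlnx_taylor_bounds: fixes x y \<delta> :: real assumes d: "\<delta> > 0" and x: "x \<ge> \<delta>" and y: "y \<ge> \<delta>"
  shows "0 \<le> y * ln y - x * ln x - (ln x + 1) * (y - x) \<and> y * ln y - x * ln x - (ln x + 1) * (y - x) \<le> (1/\<delta>) * (y - x)\<^sup>2"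
proof -
  have x0: "x > 0" and y0: "y > 0" using d x y by auto
  have F: "y * ln y - x * ln x - (ln x + 1) * (y - x) = y * (ln y - ln x) - (y - x)" by (simp add: algebra_simps)
  have l1: "ln (x / y) \<le> x / y - 1" using x0 y0 by (intro ln_le_minus_one) auto
  have l2: "ln (y / x) \<le> y / x - 1" using x0 y0 by (intro ln_le_minus_one) auto
  have "ln (x / y) = ln x - ln y" using x0 y0 by (simp add: ln_div)
  then have "y * (ln y - ln x) \<ge> y * (1 - x / y)" using l1 y0 by (intro mult_left_mono) auto
  then have lo: "y * (ln y - ln x) \<ge> y - x" using y0 by (simp add: algebra_simps)
  have "ln (y / x) = ln y - ln x" using x0 y0 by (simp add: ln_div)
  then have "y * (ln y - ln x) \<le> y * (y / x - 1)" using l2 y0 by (intro mult_left_mono) auto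
  then have "y * (ln y - ln x) - (y - x) \<le> (y - x)\<^sup>2 / x"
    using x0 by (simp add: field_simps power2_eq_square)
  also have "\<dots> \<le> (y - x)\<^sup>2 / \<delta>" using x d by (intro divide_left_mono) auto
  finally show ?thesis unfolding F using lo by simp
qed

lemma exp_taylor_bounds: fixes x y M :: real assumes x: "x \<le> M" and y: "y \<le> M"
  shows "0 \<le> exp y - exp x - exp x * (y - x) \<and> exp y - exp x - exp x * (y - x) \<le> exp M * (y - x)\<^sup>2"
proof -
  have e1: "exp y \<ge> exp x * (1 + (y - x))"
  proof -
    have "exp y = exp x * exp (y - x)" by (simp add: exp_diff)
    moreover have "exp (y - x) \<ge> 1 + (y - x)" by (rule exp_ge_add_one_self)
    ultimately show ?thesis by simp
  qed
  have e2: "exp x \<ge> exp y * (1 + (x - y))"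
  proof -
    have "exp x = exp y * exp (x - y)" by (simp add: exp_diff)
    moreover have "exp (x - y) \<ge> 1 + (x - y)" by (rule exp_ge_add_one_self)
    ultimately show ?thesis by simp
  qed
  have lo: "0 \<le> exp y - exp x - exp x * (y - x)" using e1 by (simp add: algebra_simps)
  have up1: "exp y - exp x - exp x * (y - x) \<le> (exp y - exp x) * (y - x)" using e2 by (simp add: algebra_simps)
  have up2: "(exp y - exp x) * (y - x) \<le> exp M * (y - x)\<^sup>2"
  proof (cases "y \<ge> x")
    case True
    have "exp y - exp x \<le> exp y * (y - x)" using e2 by (simp add: algebra_simps)
    also have "\<dots> \<le> exp M * (y - x)" using y True by (intro mult_right_mono) auto
    finally have "(exp y - exp x) * (y - x) \<le> exp M * (y - x) * (y - x)" using True by (intro mult_right_mono) auto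
    then show ?thesis by (simp add: power2_eq_square algebra_simps)
  next
    case False
    have "exp x - exp y \<le> exp x * (x - y)" using e1 by (simp add: algebra_simps)
    also have "\<dots> \<le> exp M * (x - y)" using x False by (intro mult_right_mono) auto
    finally have "(exp x - exp y) * (x - y) \<le> exp M * (x - y) * (x - y)" using False by (intro mult_right_mono) auto
    then show ?thesis by (simp add: power2_eq_square algebra_simps)
  qed
  show ?thesis using lo up1 up2 by linarith
qed

lemma mtrace_xlnx_has_derivative:
  assumes A: "A \<in> carrier_mat n n" "hermitian A" and pos: "\<And>U p j. spectral_decomp n A U p \<Longrightarrow> j < n \<Longrightarrow> p j > 0"
    and E: "E \<in> carrier_mat n n" "hermitian E" and trE: "mtrace E = 0" and n: "n > 0"
  shows "((\<lambda>s. Re (mtrace (mat_fun (\<lambda>x. x * ln x) (A + complex_of_real s \<cdot>\<^sub>m E)))) has_real_derivative Re (mtrace (mat_fun ln A * E))) (at 0)"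
proof -
  obtain U p where dA: "spectral_decomp n A U p" using hermitian_spectral_decomp[OF A] by blast
  define \<alpha> where "\<alpha> = Min (p ` {..<n})"
  have \<alpha>: "\<alpha> > 0" unfolding \<alpha>_def using pos[OF dA] n by (subst Min_gr_iff) auto
  have p: "\<forall>i<n. \<alpha> \<le> p i \<and> p i \<le> Max (p ` {..<n})" unfolding \<alpha>_def by auto
  obtain \<epsilon> where \<epsilon>: "\<epsilon> > 0" and near: "\<And>t V b j. \<bar>t\<bar> < \<epsilon> \<Longrightarrow>
      spectral_decomp n (A + complex_of_real t \<cdot>\<^sub>m E) V b \<Longrightarrow> j < n \<Longrightarrow> \<alpha> - \<alpha>/2 \<le> b j \<and> b j \<le> Max (p ` {..<n}) + \<alpha>/2"
    using eigenvalues_smult_perturbation_bounds[OF dA E(1) _ p, of "\<alpha>/2"] \<alpha> by auto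
  \<comment> \<open>The derivative \<open>ln x + 1\<close> is written \<open>ln x - (- 1)\<close> to match \<open>mat_fun_minus_const\<close>;
    the constant contributes nothing because \<open>E\<close> is traceless.\<close>
  have "((\<lambda>s. Re (mtrace (mat_fun (\<lambda>x. x * ln x) (A + complex_of_real s \<cdot>\<^sub>m E)))) has_real_derivative Re (mtrace (mat_fun (\<lambda>x. ln x - (- 1)) A * E))) (at 0)"
  proof (rule mtrace_mat_fun_has_derivative[OF A E \<epsilon>, where I="{\<alpha>/2..}" and K="1/(\<alpha>/2)"])
    fix x y :: real assume "x \<in> {\<alpha>/2..}" "y \<in> {\<alpha>/2..}"
    then show "0 \<le> y * ln y - x * ln x - (ln x - - 1) * (y - x) \<and> y * ln y - x * ln x - (ln x - - 1) * (y - x) \<le> 1 / (\<alpha> / 2) * (y - x)\<^sup>2"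
      using xlnx_taylor_bounds[of "\<alpha>/2" x y] \<alpha> by auto
  qed (use near in force)
  moreover have "Re (mtrace (mat_fun (\<lambda>x. ln x - (- 1)) A * E)) = Re (mtrace (mat_fun ln A * E))"
  proof -
    have Lc: "mat_fun ln A \<in> carrier_mat n n"
      using spectral_decompD(1)[OF dA] by (simp add: mat_fun_spectral_decomp[OF dA])
    have "(mat_fun ln A - complex_of_real (- 1) \<cdot>\<^sub>m 1\<^sub>m n) * E = mat_fun ln A * E - complex_of_real (- 1) \<cdot>\<^sub>m E"
      using Lc E by (simp add: minus_mult_distrib_mat[OF Lc _ E(1)] mult_smult_assoc_mat[of _ n n E n])
    then show ?thesis unfolding mat_fun_minus_const[OF dA] using Lc E trE
      by (simp add: mtrace_minus[of _ n] mtrace_smult[of _ n])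
  qed
  ultimately show ?thesis by simp
qed

lemma mtrace_exp_has_derivative:
  assumes A: "A \<in> carrier_mat n n" "hermitian A"
    and E: "E \<in> carrier_mat n n" "hermitian E"
  shows "((\<lambda>s. Re (mtrace (mat_fun exp (A + complex_of_real s \<cdot>\<^sub>m E)))) has_real_derivative Re (mtrace (mat_fun exp A * E))) (at 0)"
proof -
  obtain U p where dA: "spectral_decomp n A U p" using hermitian_spectral_decomp[OF A] by blast
  define \<beta> where "\<beta> = Max (p ` {..<n})"
  have p: "\<forall>i<n. Min (p ` {..<n}) \<le> p i \<and> p i \<le> \<beta>" unfolding \<beta>_def by auto
  obtain \<epsilon> where \<epsilon>: "\<epsilon> > 0" and near: "\<And>t V b j. \<bar>t\<bar> < \<epsilon> \<Longrightarrow>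
      spectral_decomp n (A + complex_of_real t \<cdot>\<^sub>m E) V b \<Longrightarrow> j < n \<Longrightarrow> Min (p ` {..<n}) - 1 \<le> b j \<and> b j \<le> \<beta> + 1"
    using eigenvalues_smult_perturbation_bounds[OF dA E(1) _ p, of 1] by auto
  show ?thesis
  proof (rule mtrace_mat_fun_has_derivative[OF A E \<epsilon>, where I="{..\<beta>+1}" and K="exp (\<beta>+1)"])
    fix x y :: real assume "x \<in> {..\<beta>+1}" "y \<in> {..\<beta>+1}"
    then show "0 \<le> exp y - exp x - exp x * (y - x) \<and> exp y - exp x - exp x * (y - x) \<le> exp (\<beta>+1) * (y - x)\<^sup>2"
      using exp_taylor_bounds[of x "\<beta>+1" y] by auto
  qed (use near in force)
qed

lemma spectral_decomp_eigenvector: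
  assumes dA: "spectral_decomp n A U p" and j: "j < n"
  shows "col U j \<in> carrier_vec n" "A *\<^sub>v col U j = complex_of_real (p j) \<cdot>\<^sub>v col U j"
    "conjugate (col U j) \<bullet> col U j = 1"
proof -
  note U = spectral_decompD(1,2)[OF dA]
  have A: "A \<in> carrier_mat n n" using spectral_decompD(4)[OF dA] .
  show v: "col U j \<in> carrier_vec n" using U by auto
  have AU: "A * U = U * rdiag n p"
    using U by (subst spectral_decompD(3)[OF dA]) (simp add: assoc_mult_square[of _ n] unitary_adj_mult[OF U])
  show "A *\<^sub>v col U j = complex_of_real (p j) \<cdot>\<^sub>v col U j"
  proof (rule eq_vecI)
    fix i assume "i < dim_vec (complex_of_real (p j) \<cdot>\<^sub>v col U j)"
    then have i: "i < n" using U by simp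
    have "(A *\<^sub>v col U j) $ i = (A * U) $$ (i,j)" using A U i j by simp
    also have "\<dots> = U $$ (i,j) * p j" unfolding AU using index_mult_rdiag[OF U(1) i j] .
    finally show "(A *\<^sub>v col U j) $ i = (complex_of_real (p j) \<cdot>\<^sub>v col U j) $ i" using i j U by simp
  qed (use A U in simp)
  have "conjugate (col U j) \<bullet> col U j = (adj U * U) $$ (j,j)"
    using U j by (simp add: scalar_prod_def atLeast0LessThan)
  then show "conjugate (col U j) \<bullet> col U j = 1" using unitary_adj_mult[OF U] j by simp
qed

lemma faithful_eigenvalues_pos: assumes F: "faithful n A" and dA: "spectral_decomp n A U p" and j: "j < n"
  shows "p j > 0"
proof -
  have A: "A \<in> carrier_mat n n" using spectral_decompD(4)[OF dA] .
  from F have psd: "\<And>v. v \<in> carrier_vec n \<Longrightarrow> 0 \<le> Re (conjugate v \<bullet> (A *\<^sub>v v))"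
    and rk: "vec_space.rank n A = n"
    unfolding faithful_def density_matrix_def by auto
  define v where "v = col U j"
  note v = spectral_decomp_eigenvector[OF dA j, folded v_def]
  have "conjugate v \<bullet> (A *\<^sub>v v) = complex_of_real (p j)"
    unfolding v(2) using v by (simp add: scalar_prod_smult_distrib[of _ n])
  then have pge: "p j \<ge> 0" using psd[OF v(1)] by simp
  interpret vec_space "TYPE(complex)" n .
  have "det A \<noteq> 0" using det_rank_iff[OF A] rk by simp
  moreover have "p j = 0 \<Longrightarrow> det A = 0"
  proof -
    assume p0: "p j = 0"
    have "v \<noteq> 0\<^sub>v n" using v(3) by auto
    moreover have "A *\<^sub>v v = 0\<^sub>v n" using v(1,2) p0 by auto
    ultimately show "det A = 0" using det_0_iff_vec_prod_zero_field[OF A] v(1) by blast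
  qed
  ultimately show ?thesis using pge by force
qed

lemma faithful_spectral_decomp:
  assumes "faithful n A"
  obtains U p where "spectral_decomp n A U p" "\<And>j. j < n \<Longrightarrow> p j > 0"
proof -
  have "A \<in> carrier_mat n n" "hermitian A" using assms by (auto simp: faithful_def density_matrix_def)
  then obtain U p where "spectral_decomp n A U p" using hermitian_spectral_decomp by blast
  then show ?thesis using that faithful_eigenvalues_pos[OF assms] by blast
qed

lemma partial_eqI: assumes "((\<lambda>t. f (x(i := t))) has_real_derivative D) (at (x i))"
  shows "partial f x i = D"
  unfolding partial_def using assms by (rule some_equality) (rule DERIV_unique[OF _ assms])

lemma DERIV_shift_from_0: assumes "(h has_real_derivative D) (at 0)"
  shows "((\<lambda>t. h (t - c)) has_real_derivative D) (at c)"
  using DERIV_shift[of h D c "-c"] assms by simp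

lemma rho_of_carrier[simp]: "rho_of d a b \<xi> \<in> carrier_mat d d"
  by (simp add: rho_of_def)

lemma dim_rho_of[simp]: "dim_row (rho_of d a b \<xi>) = d" "dim_col (rho_of d a b \<xi>) = d"
  by (simp_all add: rho_of_def)

lemma hatrho_of_carrier[simp]: "hatrho_of d a b y \<in> carrier_mat d d"
  by (simp add: hatrho_of_def)

lemma dim_hatrho_of[simp]: "dim_row (hatrho_of d a b y) = d" "dim_col (hatrho_of d a b y) = d"
  by (simp_all add: hatrho_of_def)

lemma hermitian_rho_of: "hermitian (rho_of d a b \<xi>)"
proof (rule hermitianI[of _ d])
  fix i j assume "i < d" "j < d"
  then show "rho_of d a b \<xi> $$ (i, j) = cnj (rho_of d a b \<xi> $$ (j, i))"
    by (auto simp: rho_of_def)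
qed simp

lemma hermitian_hatrho_of: "hermitian (hatrho_of d a b y)"
proof (rule hermitianI[of _ d])
  fix i j assume "i < d" "j < d"
  then show "hatrho_of d a b y $$ (i, j) = cnj (hatrho_of d a b y $$ (j, i))"
    by (auto simp: hatrho_of_def)
qed simp

lemma mtrace_rho_of: assumes "d \<ge> 1" shows "mtrace (rho_of d a b \<xi>) = 1"
proof -
  obtain m where d: "d = Suc m" using assms by (cases d) auto
  have "mtrace (rho_of d a b \<xi>) = (\<Sum>k<Suc m. rho_of d a b \<xi> $$ (k,k))" unfolding mtrace_def d by simp
  also have "\<dots> = (\<Sum>k<m. rho_of d a b \<xi> $$ (k,k)) + rho_of d a b \<xi> $$ (m,m)" by simp
  also have "(\<Sum>k<m. rho_of d a b \<xi> $$ (k,k)) = (\<Sum>k<m. complex_of_real ((\<xi> (k+1) + 1) / real d))"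
    by (intro sum.cong refl) (simp add: rho_of_def d)
  also have "rho_of d a b \<xi> $$ (m,m) = complex_of_real ((1 - (\<Sum>i=1..m. \<xi> i)) / real d)"
    by (simp add: rho_of_def d)
  also have "(\<Sum>k<m. complex_of_real ((\<xi> (k+1) + 1) / real d)) + complex_of_real ((1 - (\<Sum>i=1..m. \<xi> i)) / real d)
      = complex_of_real ((\<Sum>k<m. (\<xi> (k+1) + 1) / real d) + (1 - (\<Sum>i=1..m. \<xi> i)) / real d)"
    by simp
  also have "(\<Sum>k<m. (\<xi> (k+1) + 1) / real d) + (1 - (\<Sum>i=1..m. \<xi> i)) / real d = 1"
  proof -
    have "(\<Sum>i=1..m. \<xi> i) = (\<Sum>k<m. \<xi> (Suc k))" by (simp add: sum.atLeast1_atMost_eq)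
    moreover have "(\<Sum>k<m. (\<xi> (k+1) + 1) / real d) = ((\<Sum>k<m. \<xi> (Suc k)) + real m) / real d"
      by (simp add: sum_divide_distrib[symmetric] sum.distrib)
    ultimately show ?thesis by (simp add: d field_simps)
  qed
  finally show ?thesis by (simp add: d)
qed

definition unit_coord :: "nat \<Rightarrow> nat \<Rightarrow> real" where "unit_coord i = (\<lambda>k. if k = i then 1 else 0)"

lemma rho_of_affine: "rho_of d a b (\<lambda>k. \<xi> k + c * z k) = rho_of d a b \<xi> + complex_of_real c \<cdot>\<^sub>m (rho_of d a b z - rho_of d a b (\<lambda>_. 0))"
proof (rule eq_matI)
  fix i j assume "i < dim_row (rho_of d a b \<xi> + complex_of_real c \<cdot>\<^sub>m (rho_of d a b z - rho_of d a b (\<lambda>_. 0)))"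
    "j < dim_col (rho_of d a b \<xi> + complex_of_real c \<cdot>\<^sub>m (rho_of d a b z - rho_of d a b (\<lambda>_. 0)))"
  then have i: "i < d" and j: "j < d" by auto
  show "rho_of d a b (\<lambda>k. \<xi> k + c * z k) $$ (i, j) = (rho_of d a b \<xi> + complex_of_real c \<cdot>\<^sub>m (rho_of d a b z - rho_of d a b (\<lambda>_. 0))) $$ (i, j)"
    using i j by (auto simp: rho_of_def sum.distrib sum_distrib_left[symmetric] field_simps)
qed auto

lemma fun_upd_unit_coord: "\<xi>(i := t) = (\<lambda>k. \<xi> k + (t - \<xi> i) * unit_coord i k)"
  by (auto simp: unit_coord_def)

text \<open>Since \<open>rho_of d a b\<close> is affine, \<open>rho_dir d a b i\<close> is its partial derivative in the
  \<open>i\<close>-th coordinate.\<close>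

definition rho_dir :: "nat \<Rightarrow> (nat \<Rightarrow> nat \<Rightarrow> nat) \<Rightarrow> (nat \<Rightarrow> nat \<Rightarrow> nat) \<Rightarrow> nat \<Rightarrow> complex mat" where
  "rho_dir d a b i = rho_of d a b (unit_coord i) - rho_of d a b (\<lambda>_. 0)"

lemma rho_of_fun_upd: "rho_of d a b (\<xi>(i := t)) = rho_of d a b \<xi> + complex_of_real (t - \<xi> i) \<cdot>\<^sub>m rho_dir d a b i"
  unfolding fun_upd_unit_coord rho_dir_def by (rule rho_of_affine)

lemma hatrho_of_linear: "hatrho_of d a b (\<lambda>k. y k + c * z k) = hatrho_of d a b y + complex_of_real c \<cdot>\<^sub>m hatrho_of d a b z"
proof (rule eq_matI)
  fix i j assume "i < dim_row (hatrho_of d a b y + complex_of_real c \<cdot>\<^sub>m hatrho_of d a b z)"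
    "j < dim_col (hatrho_of d a b y + complex_of_real c \<cdot>\<^sub>m hatrho_of d a b z)"
  then have i: "i < d" and j: "j < d" by auto
  show "hatrho_of d a b (\<lambda>k. y k + c * z k) $$ (i, j) = (hatrho_of d a b y + complex_of_real c \<cdot>\<^sub>m hatrho_of d a b z) $$ (i, j)"
    using i j by (auto simp: hatrho_of_def sum.distrib sum_distrib_left[symmetric] field_simps)
qed auto

lemma hatrho_of_fun_upd: "hatrho_of d a b (y(i := t)) = hatrho_of d a b y + complex_of_real (t - y i) \<cdot>\<^sub>m hatrho_of d a b (unit_coord i)"
  unfolding fun_upd_unit_coord by (rule hatrho_of_linear)

lemma rho_dir_carrier[simp]: "rho_dir d a b i \<in> carrier_mat d d" unfolding rho_dir_def by auto

lemma hermitian_rho_dir: "hermitian (rho_dir d a b i)"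
  unfolding rho_dir_def by (rule hermitian_minus[of _ d]) (auto simp: hermitian_rho_of)

lemma mtrace_rho_dir: "d \<ge> 1 \<Longrightarrow> mtrace (rho_dir d a b i) = 0"
  unfolding rho_dir_def by (simp add: mtrace_minus[of _ d] mtrace_rho_of)

lemma hatxi_eq_mtrace_ln: assumes d: "d \<ge> 1" and F: "faithful d (rho_of d a b \<xi>)"
  shows "hatxi d a b \<xi> i = Re (mtrace (mat_fun ln (rho_of d a b \<xi>) * rho_dir d a b i))"
proof -
  let ?R = "rho_of d a b \<xi>"
  let ?h = "\<lambda>s. Re (mtrace (mat_fun (\<lambda>x. x * ln x) (?R + complex_of_real s \<cdot>\<^sub>m rho_dir d a b i)))"
  have D: "(?h has_real_derivative Re (mtrace (mat_fun ln ?R * rho_dir d a b i))) (at 0)"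
    by (rule mtrace_xlnx_has_derivative[of _ d]) (use d F faithful_eigenvalues_pos hermitian_rho_dir mtrace_rho_dir hermitian_rho_of in auto)
  have eq: "(\<lambda>t. Re (mtrace (rho_of d a b (\<xi>(i := t)) * mat_fun ln (rho_of d a b (\<xi>(i := t)))))) = (\<lambda>t. ?h (t - \<xi> i))"
  proof
    fix t
    show "Re (mtrace (rho_of d a b (\<xi>(i := t)) * mat_fun ln (rho_of d a b (\<xi>(i := t))))) = ?h (t - \<xi> i)"
    proof -
      have "rho_of d a b (\<xi>(i := t)) * mat_fun ln (rho_of d a b (\<xi>(i := t))) = mat_fun (\<lambda>x. x * ln x) (rho_of d a b (\<xi>(i := t)))"
        by (rule mult_mat_fun_ln[OF rho_of_carrier hermitian_rho_of])
      then show ?thesis unfolding rho_of_fun_upd by simp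
    qed
  qed
  show ?thesis unfolding hatxi_def
    by (rule partial_eqI) (unfold eq, rule DERIV_shift_from_0[OF D])
qed

section \<open>Dual coordinates\<close>

lemma pair_partition_range: assumes pp: "pair_partition d a b" and jk: "j < k" "k < d"
  shows "a j k \<in> {d..<d^2}" "b j k \<in> {d..<d^2}"
proof -
  let ?f = "\<lambda>(j,k,t). if t then a j k else b j k"
  have img: "?f ` {(j,k,t). j < k \<and> k < d} = {d..<d^2}"
    using pp unfolding pair_partition_def by (rule bij_betw_imp_surj_on)
  have m1: "(j,k,True) \<in> {(j,k,t). j < k \<and> k < d}" and m2: "(j,k,False) \<in> {(j,k,t). j < k \<and> k < d}"
    using jk by auto
  show "a j k \<in> {d..<d^2}" using imageI[OF m1, of ?f] unfolding img by simp
  show "b j k \<in> {d..<d^2}" using imageI[OF m2, of ?f] unfolding img by simp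
qed

lemma pair_partition_inj: assumes pp: "pair_partition d a b" and jk: "j < k" "k < d" and jk': "j' < k'" "k' < d"
  shows "a j k \<noteq> b j' k'" "a j k = a j' k' \<longleftrightarrow> j = j' \<and> k = k'" "b j k = b j' k' \<longleftrightarrow> j = j' \<and> k = k'"
proof -
  have inj: "inj_on (\<lambda>(j,k,t). if t then a j k else b j k) {(j,k,t). j < k \<and> k < d}"
    using pp unfolding pair_partition_def bij_betw_def by auto
  show "a j k \<noteq> b j' k'" using inj_onD[OF inj, of "(j,k,True)" "(j',k',False)"] jk jk' by auto
  show "a j k = a j' k' \<longleftrightarrow> j = j' \<and> k = k'" using inj_onD[OF inj, of "(j,k,True)" "(j',k',True)"] jk jk' by auto
  show "b j k = b j' k' \<longleftrightarrow> j = j' \<and> k = k'" using inj_onD[OF inj, of "(j,k,False)" "(j',k',False)"] jk jk' by auto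
qed

lemma hatrho_of_cong: assumes pp: "pair_partition d a b" and yz: "\<And>i. i \<in> {1..<d^2} \<Longrightarrow> y i = z i"
  shows "hatrho_of d a b y = hatrho_of d a b z"
proof (rule eq_matI)
  have dd: "d \<le> d^2" by (simp add: power2_eq_square)
  have s: "(\<Sum>i=1..d-1. y i) = (\<Sum>i=1..d-1. z i)" using yz dd by (intro sum.cong refl) auto
  fix i j assume "i < dim_row (hatrho_of d a b z)" "j < dim_col (hatrho_of d a b z)"
  then have i: "i < d" and j: "j < d" by auto
  have y1: "k < d - 1 \<Longrightarrow> y (k+1) = z (k+1)" for k using yz[of "k+1"] dd by auto
  have ya: "p < q \<Longrightarrow> q < d \<Longrightarrow> y (a p q) = z (a p q) \<and> y (b p q) = z (b p q)" for p q
    using yz pair_partition_range[OF pp, of p q] dd by auto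
  show "hatrho_of d a b y $$ (i, j) = hatrho_of d a b z $$ (i, j)"
    using i j s y1 ya[of i j] ya[of j i] by (auto simp: hatrho_of_def)
qed auto

lemma hatrho_of_zero: "hatrho_of d a b (\<lambda>_. 0) = 0\<^sub>m d d"
  by (intro eq_matI) (auto simp: hatrho_of_def)

lemma mtrace_mult_hatrho_of_sum: assumes A: "A \<in> carrier_mat d d" and T: "finite T"
  shows "Re (mtrace (A * hatrho_of d a b (\<lambda>k. \<Sum>i\<in>T. z i * unit_coord i k))) = (\<Sum>i\<in>T. z i * Re (mtrace (A * hatrho_of d a b (unit_coord i))))"
  using T
proof (induction T rule: finite_induct)
  case empty
  show ?case using A by (simp add: hatrho_of_zero mtrace_def)
next
  case (insert x T)
  have eq: "(\<lambda>k. \<Sum>i\<in>insert x T. z i * unit_coord i k) = (\<lambda>k. (\<Sum>i\<in>T. z i * unit_coord i k) + z x * unit_coord x k)"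
    using insert by (simp add: add.commute)
  have c1: "hatrho_of d a b (\<lambda>k. \<Sum>i\<in>T. z i * unit_coord i k) \<in> carrier_mat d d" "hatrho_of d a b (unit_coord x) \<in> carrier_mat d d" by auto
  have "A * hatrho_of d a b (\<lambda>k. \<Sum>i\<in>insert x T. z i * unit_coord i k) =
      A * hatrho_of d a b (\<lambda>k. \<Sum>i\<in>T. z i * unit_coord i k) + complex_of_real (z x) \<cdot>\<^sub>m (A * hatrho_of d a b (unit_coord x))"
    unfolding eq hatrho_of_linear using mult_add_distrib_mat[OF A c1(1) smult_carrier_mat[OF c1(2)]] mult_smult_distrib[OF A c1(2)] by simp
  then show ?case using insert A c1 by (simp add: mtrace_add[of _ d] mtrace_smult[of _ d])
qed

lemma mtrace_mult_hatrho_of_expand: assumes pp: "pair_partition d a b" and A: "A \<in> carrier_mat d d"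
  shows "Re (mtrace (A * hatrho_of d a b z)) = (\<Sum>i\<in>{1..<d^2}. z i * Re (mtrace (A * hatrho_of d a b (unit_coord i))))"
proof -
  have "hatrho_of d a b z = hatrho_of d a b (\<lambda>k. \<Sum>i\<in>{1..<d^2}. z i * unit_coord i k)"
    by (rule hatrho_of_cong[OF pp]) (simp add: unit_coord_def if_distrib[where f="\<lambda>x. _ * x"] cong: if_cong)
  then show ?thesis using mtrace_mult_hatrho_of_sum[where T="{1..<d^2}" and z=z and a=a and b=b, OF A] by simp
qed

definition single_entry_mat :: "nat \<Rightarrow> nat \<Rightarrow> nat \<Rightarrow> complex \<Rightarrow> complex mat" where
  "single_entry_mat n q p c = mat n n (\<lambda>(r,s). if r = q \<and> s = p then c else 0)"

lemma single_entry_mat_carrier[simp]: "single_entry_mat n q p c \<in> carrier_mat n n" by (simp add: single_entry_mat_def)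

lemma dim_single_entry_mat[simp]: "dim_row (single_entry_mat n q p c) = n" "dim_col (single_entry_mat n q p c) = n"
  by (simp_all add: single_entry_mat_def)

lemma mtrace_mult_single_entry: assumes L: "L \<in> carrier_mat n n" and q: "q < n" and p: "p < n"
  shows "mtrace (L * single_entry_mat n q p c) = L $$ (p,q) * c"
proof -
  have "mtrace (L * single_entry_mat n q p c) = (\<Sum>i<n. \<Sum>r<n. L $$ (i,r) * single_entry_mat n q p c $$ (r,i))"
    unfolding mtrace_def using L carrier_matD[OF L] by (auto simp: scalar_prod_def atLeast0LessThan intro!: sum.cong)
  also have "\<dots> = (\<Sum>i<n. if i = p then L $$ (i,q) * c else 0)"
    using q by (intro sum.cong refl) (auto simp: single_entry_mat_def if_distrib[where f="\<lambda>x. _ * x"] sum.delta cong: if_cong)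
  also have "\<dots> = L $$ (p,q) * c" using p by simp
  finally show ?thesis .
qed

lemma mtrace_mult_single_entry_pair: assumes L: "L \<in> carrier_mat n n" and "q < n" "p < n" "q' < n" "p' < n"
  shows "mtrace (L * (single_entry_mat n q p c + single_entry_mat n q' p' c')) = L $$ (p,q) * c + L $$ (p',q') * c'"
proof -
  have "L * (single_entry_mat n q p c + single_entry_mat n q' p' c') = L * single_entry_mat n q p c + L * single_entry_mat n q' p' c'"
    by (rule mult_add_distrib_mat[OF L single_entry_mat_carrier single_entry_mat_carrier])
  then show ?thesis using assms by (simp add: mtrace_add[of _ n] mtrace_mult_single_entry)
qed

lemma rho_dir_re: assumes pp: "pair_partition d a b" and jk: "j < k" "k < d"
  shows "rho_dir d a b (a j k) = single_entry_mat d j k (1/2) + single_entry_mat d k j (1/2)"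
proof (rule eq_matI)
  have A: "a j k \<ge> d" using pair_partition_range(1)[OF pp jk] by simp
  have aa: "\<And>r s. r < s \<Longrightarrow> s < d \<Longrightarrow> (a r s = a j k) = (r = j \<and> s = k)"
    using pair_partition_inj(2)[OF pp _ _ jk] by blast
  have ba: "\<And>r s. r < s \<Longrightarrow> s < d \<Longrightarrow> (b r s = a j k) = False"
    using pair_partition_inj(1)[OF pp jk] by metis
  have s0: "(\<Sum>i=1..d-1. unit_coord (a j k) i) = 0" using A by (intro sum.neutral) (auto simp: unit_coord_def)
  fix r s assume "r < dim_row (single_entry_mat d j k (1/2) + single_entry_mat d k j (1/2))" "s < dim_col (single_entry_mat d j k (1/2) + single_entry_mat d k j (1/2))"
  then have r: "r < d" and s: "s < d" by auto
  show "rho_dir d a b (a j k) $$ (r, s) = (single_entry_mat d j k (1/2) + single_entry_mat d k j (1/2)) $$ (r, s)"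
    by (cases r s rule: linorder_cases)
      (use r s jk A s0 aa ba in \<open>auto simp: rho_dir_def rho_of_def single_entry_mat_def unit_coord_def\<close>)
qed (auto simp: rho_dir_def)

lemma rho_dir_im: assumes pp: "pair_partition d a b" and jk: "j < k" "k < d"
  shows "rho_dir d a b (b j k) = single_entry_mat d j k (- \<i>/2) + single_entry_mat d k j (\<i>/2)"
proof (rule eq_matI)
  have A: "b j k \<ge> d" using pair_partition_range(2)[OF pp jk] by simp
  have bb: "\<And>r s. r < s \<Longrightarrow> s < d \<Longrightarrow> (b r s = b j k) = (r = j \<and> s = k)"
    using pair_partition_inj(3)[OF pp _ _ jk] by blast
  have ab: "\<And>r s. r < s \<Longrightarrow> s < d \<Longrightarrow> (a r s = b j k) = False"
    using pair_partition_inj(1)[OF pp _ _ jk] by metis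
  have s0: "(\<Sum>i=1..d-1. unit_coord (b j k) i) = 0" using A by (intro sum.neutral) (auto simp: unit_coord_def)
  fix r s assume "r < dim_row (single_entry_mat d j k (- \<i>/2) + single_entry_mat d k j (\<i>/2))" "s < dim_col (single_entry_mat d j k (- \<i>/2) + single_entry_mat d k j (\<i>/2))"
  then have r: "r < d" and s: "s < d" by auto
  show "rho_dir d a b (b j k) $$ (r, s) = (single_entry_mat d j k (- \<i>/2) + single_entry_mat d k j (\<i>/2)) $$ (r, s)"
    by (cases r s rule: linorder_cases)
      (use r s jk A s0 bb ab in \<open>auto simp: rho_dir_def rho_of_def single_entry_mat_def unit_coord_def\<close>)
qed (auto simp: rho_dir_def)

lemma rho_dir_diag: assumes pp: "pair_partition d a b" and k: "k < d - 1"
  shows "rho_dir d a b (k+1) = single_entry_mat d k k (1 / of_nat d) + single_entry_mat d (d-1) (d-1) (- 1 / of_nat d)"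
proof (rule eq_matI)
  have a0: "\<And>r s. r < s \<Longrightarrow> s < d \<Longrightarrow> (a r s = k + 1) = False"
    using pair_partition_range(1)[OF pp] k by fastforce
  have b0: "\<And>r s. r < s \<Longrightarrow> s < d \<Longrightarrow> (b r s = k + 1) = False"
    using pair_partition_range(2)[OF pp] k by fastforce
  have s1: "(\<Sum>i=1..d-1. unit_coord (k+1) i) = 1" using k by (simp add: unit_coord_def)
  fix r s assume "r < dim_row (single_entry_mat d k k (1 / of_nat d) + single_entry_mat d (d-1) (d-1) (- 1 / of_nat d))"
    "s < dim_col (single_entry_mat d k k (1 / of_nat d) + single_entry_mat d (d-1) (d-1) (- 1 / of_nat d))"
  then have r: "r < d" and s: "s < d" by auto
  show "rho_dir d a b (k+1) $$ (r, s) = (single_entry_mat d k k (1 / of_nat d) + single_entry_mat d (d-1) (d-1) (- 1 / of_nat d)) $$ (r, s)"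
    by (cases r s rule: linorder_cases)
      (use r s k s1 a0 b0 in \<open>auto simp: rho_dir_def rho_of_def single_entry_mat_def unit_coord_def diff_divide_distrib\<close>)
qed (auto simp: rho_dir_def)

lemma mtrace_mult_rho_dir_diag:
  assumes pp: "pair_partition d a b" and L: "L \<in> carrier_mat d d" and k: "k < d - 1"
  shows "Re (mtrace (L * rho_dir d a b (k+1))) = (Re (L $$ (k,k)) - Re (L $$ (d-1,d-1))) / real d"
  unfolding rho_dir_diag[OF pp k] using k
  by (subst mtrace_mult_single_entry_pair[OF L]) (auto simp: diff_divide_distrib)

lemma mtrace_mult_rho_dir_re:
  assumes pp: "pair_partition d a b" and L: "L \<in> carrier_mat d d" "hermitian L" and jk: "j < k" "k < d"
  shows "Re (mtrace (L * rho_dir d a b (a j k))) = Re (L $$ (j,k))"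
  unfolding rho_dir_re[OF pp jk] using jk hermitian_index[OF L(2), of k j] L
  by (subst mtrace_mult_single_entry_pair[OF L(1)]) auto

lemma mtrace_mult_rho_dir_im:
  assumes pp: "pair_partition d a b" and L: "L \<in> carrier_mat d d" "hermitian L" and jk: "j < k" "k < d"
  shows "Re (mtrace (L * rho_dir d a b (b j k))) = - Im (L $$ (j,k))"
  unfolding rho_dir_im[OF pp jk] using jk hermitian_index[OF L(2), of k j] L
  by (subst mtrace_mult_single_entry_pair[OF L(1)]) auto

text \<open>The \<open>rho_dir d a b i\<close> and the \<open>hatrho_of d a b (unit_coord i)\<close> are dual bases for the
  trace form modulo the identity, so the \<open>rho_dir\<close>-coordinates of a Hermitian \<open>L\<close> determine
  its traceless part.\<close>

lemma hatrho_of_dual_coords: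
  assumes pp: "pair_partition d a b" and d: "d \<ge> 1" and L: "L \<in> carrier_mat d d" "hermitian L"
    and y: "\<And>i. y i = Re (mtrace (L * rho_dir d a b i))"
  shows "hatrho_of d a b y = L - (mtrace L / of_nat d) \<cdot>\<^sub>m 1\<^sub>m d"
proof -
  obtain D where dD: "d = Suc D" using d by (cases d) auto
  define dg where "dg = (\<lambda>k. Re (L $$ (k,k)))"
  have Ld: "\<And>k. k < d \<Longrightarrow> L $$ (k,k) = complex_of_real (dg k)"
    unfolding dg_def using hermitian_diag_real[OF L(2)] L by auto
  have yd: "\<And>k. k < D \<Longrightarrow> y (k+1) = (dg k - dg D) / real d"
    unfolding y dg_def using mtrace_mult_rho_dir_diag[OF pp L(1)] dD by simp
  have sy: "(\<Sum>i=1..d-1. y i) = ((\<Sum>k<D. dg k) - real D * dg D) / real d"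
  proof -
    have "(\<Sum>i=1..d-1. y i) = (\<Sum>k<D. y (Suc k))" using dD by (simp add: sum.atLeast1_atMost_eq)
    also have "\<dots> = (\<Sum>k<D. (dg k - dg D) / real d)" using yd by (intro sum.cong refl) auto
    finally show ?thesis by (simp add: sum_subtractf sum_divide_distrib[symmetric])
  qed
  have trL: "mtrace L = complex_of_real ((\<Sum>k<D. dg k) + dg D)"
  proof -
    have "mtrace L = (\<Sum>k<Suc D. L $$ (k,k))" unfolding mtrace_def using L dD by simp
    also have "\<dots> = (\<Sum>k<Suc D. complex_of_real (dg k))" using Ld dD by (intro sum.cong) auto
    finally show ?thesis by simp
  qed
  have rd: "real D = real d - 1" and d0: "real d \<noteq> 0" using dD by simp_all
  show ?thesis
  proof (rule eq_matI)
    fix r s assume "r < dim_row (L - (mtrace L / of_nat d) \<cdot>\<^sub>m 1\<^sub>m d)" "s < dim_col (L - (mtrace L / of_nat d) \<cdot>\<^sub>m 1\<^sub>m d)"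
    then have r: "r < d" and s: "s < d" using L by auto
    consider "r < s" | "s < r" | "r = s" "r < D" | "r = s" "r = D" using r dD by linarith
    then show "hatrho_of d a b y $$ (r, s) = (L - (mtrace L / of_nat d) \<cdot>\<^sub>m 1\<^sub>m d) $$ (r, s)"
    proof cases
      case 1
      then show ?thesis using r s L y mtrace_mult_rho_dir_re[OF pp L 1 s] mtrace_mult_rho_dir_im[OF pp L 1 s]
        by (simp add: hatrho_of_def complex_eq_iff)
    next
      case 2
      then show ?thesis using r s L y mtrace_mult_rho_dir_re[OF pp L 2 r] mtrace_mult_rho_dir_im[OF pp L 2 r]
          hermitian_index[OF L(2), of r s]
        by (simp add: hatrho_of_def complex_eq_iff)
    next
      case 3
      have "real d * y (r+1) - (\<Sum>i=1..d-1. y i) = dg r - ((\<Sum>k<D. dg k) + dg D) / real d"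
        unfolding sy yd[OF 3(2)] rd using d0 by (simp add: field_simps)
      then show ?thesis using 3 r dD L Ld[OF r] unfolding trL by (simp add: hatrho_of_def)
    next
      case 4
      have "- (\<Sum>i=1..d-1. y i) = dg r - ((\<Sum>k<D. dg k) + dg D) / real d"
        unfolding sy 4(2) rd using d0 by (simp add: field_simps)
      then show ?thesis using 4 r dD L Ld[OF r] unfolding trL by (simp add: hatrho_of_def)
    qed
  qed (use L in auto)
qed

lemma hatrho_eq_hatrho_of:
  assumes pp: "pair_partition d a b" and d: "d \<ge> 1" and F: "faithful d (rho_of d a b \<xi>)"
  shows "hatrho d (rho_of d a b \<xi>) = hatrho_of d a b (hatxi d a b \<xi>)"
proof -
  let ?L = "mat_fun ln (rho_of d a b \<xi>)"
  have L: "?L \<in> carrier_mat d d" "hermitian ?L"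
    using mat_fun_hermitian[OF rho_of_carrier hermitian_rho_of] by auto
  have "\<And>i. hatxi d a b \<xi> i = Re (mtrace (?L * rho_dir d a b i))"
    using hatxi_eq_mtrace_ln[OF d F] by auto
  then show ?thesis
    unfolding hatrho_def by (rule hatrho_of_dual_coords[OF pp d L, symmetric])
qed

lemma mtrace_hatrho:
  assumes "A \<in> carrier_mat d d" "hermitian A" "d > 0"
  shows "mtrace (hatrho d A) = 0"
proof -
  have "mat_fun ln A \<in> carrier_mat d d" using mat_fun_hermitian[OF assms(1,2)] by auto
  then have "mtrace (hatrho d A) = mtrace (mat_fun ln A) - mtrace (mat_fun ln A) / of_nat d * mtrace (1\<^sub>m d)"
    unfolding hatrho_def by (simp add: mtrace_minus[of _ d] mtrace_smult[of _ d])
  also have "mtrace (1\<^sub>m d) = of_nat d" by (simp add: mtrace_def)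
  finally show ?thesis using assms(3) by simp
qed

section \<open>The potential and the relative entropy\<close>

lemma spectral_decomp_hatrho: assumes dA: "spectral_decomp d A U p"
  shows "spectral_decomp d (hatrho d A) U (\<lambda>j. ln (p j) - (\<Sum>k<d. ln (p k)) / real d)"
    and "mtrace (mat_fun ln A) = complex_of_real (\<Sum>k<d. ln (p k))"
proof -
  note U = spectral_decompD(1,2)[OF dA]
  have L: "mat_fun ln A = U * rdiag d (ln \<circ> p) * adj U" by (rule mat_fun_spectral_decomp[OF dA])
  show tr: "mtrace (mat_fun ln A) = complex_of_real (\<Sum>k<d. ln (p k))"
    unfolding L using mtrace_conj_rdiag[OF U] by simp
  have "hatrho d A = U * rdiag d (\<lambda>j. (ln \<circ> p) j - (\<Sum>k<d. ln (p k)) / real d) * adj U"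
    unfolding hatrho_def conj_rdiag_shift[OF U] tr L[symmetric] by simp
  then show "spectral_decomp d (hatrho d A) U (\<lambda>j. ln (p j) - (\<Sum>k<d. ln (p k)) / real d)"
    using U unfolding spectral_decomp_def by (simp add: comp_def)
qed

lemma mat_fun_exp_hatrho:
  assumes F: "faithful d A"
  shows "mat_fun exp (hatrho d A) = complex_of_real (exp (- Re (mtrace (mat_fun ln A)) / real d)) \<cdot>\<^sub>m A"
proof -
  obtain U p where dA: "spectral_decomp d A U p" and pos: "\<And>j. j < d \<Longrightarrow> p j > 0"
    using faithful_spectral_decomp[OF F] by blast
  note U = spectral_decompD(1,2)[OF dA]
  define c where "c = (\<Sum>k<d. ln (p k)) / real d"
  have c: "- Re (mtrace (mat_fun ln A)) / real d = - c" unfolding c_def spectral_decomp_hatrho(2)[OF dA] by simp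
  have "mat_fun exp (hatrho d A) = U * rdiag d (exp \<circ> (\<lambda>j. ln (p j) - c)) * adj U"
    unfolding c_def by (rule mat_fun_spectral_decomp[OF spectral_decomp_hatrho(1)[OF dA]])
  also have "rdiag d (exp \<circ> (\<lambda>j. ln (p j) - c)) = rdiag d (\<lambda>j. exp (- c) * p j)"
    using pos by (intro eq_matI) (auto simp: exp_diff exp_minus field_simps)
  also have "U * rdiag d (\<lambda>j. exp (- c) * p j) * adj U = complex_of_real (exp (- c)) \<cdot>\<^sub>m A"
    unfolding conj_rdiag_scale[OF U(1)] spectral_decompD(3)[OF dA, symmetric] ..
  finally show ?thesis unfolding c by simp
qed

lemma mtrace_exp_hatrho:
  assumes F: "faithful d A"
  shows "Re (mtrace (mat_fun exp (hatrho d A))) = exp (- Re (mtrace (mat_fun ln A)) / real d)"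
  using F unfolding mat_fun_exp_hatrho[OF F]
  by (simp add: faithful_def density_matrix_def mtrace_smult[of _ d])

lemma psi_eq:
  assumes F: "faithful d A" and y: "hatrho_of d a b y = hatrho d A"
  shows "psi d a b y = - Re (mtrace (mat_fun ln A)) / real d"
  unfolding psi_def y mtrace_exp_hatrho[OF F] by simp

lemma partial_psi_eq:
  assumes F: "faithful d A" and y: "hatrho_of d a b y = hatrho d A"
  shows "partial (psi d a b) y i = Re (mtrace (A * hatrho_of d a b (unit_coord i)))"
proof -
  have A: "A \<in> carrier_mat d d" using F by (simp add: faithful_def density_matrix_def)
  define X where "X = hatrho d A"
  define c where "c = exp (- Re (mtrace (mat_fun ln A)) / real d)"
  let ?F = "hatrho_of d a b (unit_coord i)"
  let ?T = "\<lambda>s. Re (mtrace (mat_fun exp (X + complex_of_real s \<cdot>\<^sub>m ?F)))"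
  have Xc: "X \<in> carrier_mat d d" "hermitian X"
    unfolding X_def y[symmetric] by (simp_all add: hermitian_hatrho_of)
  have T0: "?T 0 = c"
    using mtrace_exp_hatrho[OF F] add_zero_smult[OF Xc(1) hatrho_of_carrier] by (simp add: X_def c_def)
  have "mtrace (mat_fun exp X * ?F) = complex_of_real c * mtrace (A * ?F)"
    unfolding X_def c_def mat_fun_exp_hatrho[OF F] using A
    by (simp add: mult_smult_assoc_mat[of _ d d _ d] mtrace_smult[of _ d])
  then have "Re (mtrace (mat_fun exp X * ?F)) = c * Re (mtrace (A * ?F))" by simp
  then have DT: "(?T has_real_derivative c * Re (mtrace (A * ?F))) (at 0)"
    using mtrace_exp_has_derivative[OF Xc hatrho_of_carrier[of d a b "unit_coord i"]
        hermitian_hatrho_of[of d a b "unit_coord i"]] by simp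
  have chain: "((\<lambda>s. ln (?T s)) has_real_derivative inverse (?T 0) * (c * Re (mtrace (A * ?F)))) (at 0)"
    by (rule DERIV_chain2[OF DERIV_ln DT]) (unfold T0, simp add: c_def)
  have cancel: "inverse (?T 0) * (c * Re (mtrace (A * ?F))) = Re (mtrace (A * ?F))"
    unfolding T0 by (simp add: c_def)
  have Dln: "((\<lambda>s. ln (?T s)) has_real_derivative Re (mtrace (A * ?F))) (at 0)"
    using chain unfolding cancel .
  have eq: "(\<lambda>t. psi d a b (y(i := t))) = (\<lambda>t. ln (?T (t - y i)))"
    unfolding psi_def hatrho_of_fun_upd y X_def by simp
  show ?thesis
    by (rule partial_eqI) (unfold eq, rule DERIV_shift_from_0[OF Dln])
qed

lemma mtrace_mult_hatrho:
  assumes A: "A \<in> carrier_mat d d" and trA: "mtrace A = 1" and S: "S \<in> carrier_mat d d" "hermitian S"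
  shows "Re (mtrace (A * hatrho d S)) = Re (mtrace (A * mat_fun ln S)) - Re (mtrace (mat_fun ln S)) / real d"
proof -
  have L: "mat_fun ln S \<in> carrier_mat d d" using mat_fun_hermitian[OF S] by auto
  let ?c = "mtrace (mat_fun ln S) / of_nat d"
  have "A * hatrho d S = A * mat_fun ln S - ?c \<cdot>\<^sub>m (A * 1\<^sub>m d)"
    unfolding hatrho_def using A L mult_minus_distrib_mat[OF A L smult_carrier_mat[OF one_carrier_mat]]
      mult_smult_distrib[OF A one_carrier_mat] by simp
  then have "mtrace (A * hatrho d S) = mtrace (A * mat_fun ln S) - ?c * mtrace A"
    using A L by (simp add: mtrace_minus[of _ d] mtrace_smult[of _ d])
  then show ?thesis using trA by simp
qed

lemma rel_entropy_eq_mtrace: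
  assumes "A \<in> carrier_mat n n" "hermitian A" "B \<in> carrier_mat n n" "hermitian B"
  shows "rel_entropy A B = Re (mtrace (A * mat_fun ln A)) - Re (mtrace (A * mat_fun ln B))"
proof -
  have L: "mat_fun ln A \<in> carrier_mat n n" "mat_fun ln B \<in> carrier_mat n n"
    using mat_fun_hermitian assms by auto
  then show ?thesis
    unfolding rel_entropy_def using assms(1)
    by (simp add: mult_minus_distrib_mat[OF assms(1) L] mtrace_minus[of _ n])
qed

lemma rel_entropy_eq_Dhat:
  assumes pp: "pair_partition d a b" and d: "d \<ge> 1"
    and F1: "faithful d (rho_of d a b \<xi>)" and F2: "faithful d (rho_of d a b \<eta>)"
  shows "rel_entropy (rho_of d a b \<xi>) (rho_of d a b \<eta>) = Dhat d a b (hatxi d a b \<eta>) (hatxi d a b \<xi>)"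
proof -
  let ?R = "rho_of d a b \<xi>" and ?S = "rho_of d a b \<eta>"
  let ?x = "hatxi d a b \<eta>" and ?y = "hatxi d a b \<xi>"
  let ?c = "\<lambda>i. Re (mtrace (?R * hatrho_of d a b (unit_coord i)))"
  have hx: "hatrho_of d a b ?x = hatrho d ?S" and hy: "hatrho_of d a b ?y = hatrho d ?R"
    using hatrho_eq_hatrho_of[OF pp d] F1 F2 by auto
  have "(\<Sum>i\<in>{1..<d^2}. (?x i - ?y i) * partial (psi d a b) ?y i)
      = (\<Sum>i\<in>{1..<d^2}. ?x i * ?c i) - (\<Sum>i\<in>{1..<d^2}. ?y i * ?c i)"
    unfolding partial_psi_eq[OF F1 hy] by (simp add: sum_subtractf[symmetric] algebra_simps)
  also have "\<dots> = Re (mtrace (?R * hatrho_of d a b ?x)) - Re (mtrace (?R * hatrho_of d a b ?y))"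
    by (simp only: mtrace_mult_hatrho_of_expand[OF pp rho_of_carrier, where z = ?x]
        mtrace_mult_hatrho_of_expand[OF pp rho_of_carrier, where z = ?y])
  finally have lin: "(\<Sum>i\<in>{1..<d^2}. (?x i - ?y i) * partial (psi d a b) ?y i)
      = Re (mtrace (?R * hatrho d ?S)) - Re (mtrace (?R * hatrho d ?R))"
    unfolding hx hy .
  have trR: "mtrace ?R = 1" using F1 by (simp add: faithful_def density_matrix_def)
  show ?thesis
    unfolding Dhat_def lin psi_eq[OF F2 hx] psi_eq[OF F1 hy]
      mtrace_mult_hatrho[OF rho_of_carrier trR rho_of_carrier hermitian_rho_of]
      rel_entropy_eq_mtrace[OF rho_of_carrier hermitian_rho_of rho_of_carrier hermitian_rho_of]
    by simp
qed

lemma Dhat_diff_affine: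
  "\<exists>c :: nat \<Rightarrow> real. \<exists>c0 :: real. \<forall>x.
     Dhat d a b x y1 - Dhat d a b x y2 = c0 + (\<Sum>i\<in>{1..<d^2}. c i * x i)"
proof (intro exI allI)
  fix x
  let ?p1 = "partial (psi d a b) y1" and ?p2 = "partial (psi d a b) y2"
  show "Dhat d a b x y1 - Dhat d a b x y2 =
    (psi d a b y2 - psi d a b y1 + (\<Sum>i\<in>{1..<d^2}. y1 i * ?p1 i) - (\<Sum>i\<in>{1..<d^2}. y2 i * ?p2 i))
    + (\<Sum>i\<in>{1..<d^2}. (?p2 i - ?p1 i) * x i)"
    unfolding Dhat_def by (simp add: sum_subtractf algebra_simps sum.distrib)
qed

theorem mainTheorem8:
  fixes d :: nat and a b :: "nat \<Rightarrow> nat \<Rightarrow> nat"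
  assumes "d \<ge> 2" and "pair_partition d a b"
  shows "(\<forall>\<xi>. faithful d (rho_of d a b \<xi>) \<longrightarrow>
            hatrho d (rho_of d a b \<xi>) = hatrho_of d a b (hatxi d a b \<xi>) \<and>
            hermitian (hatrho d (rho_of d a b \<xi>)) \<and> mtrace (hatrho d (rho_of d a b \<xi>)) = 0)
       \<and> (\<forall>\<xi> \<eta>. faithful d (rho_of d a b \<xi>) \<and> faithful d (rho_of d a b \<eta>) \<longrightarrow>
            rel_entropy (rho_of d a b \<xi>) (rho_of d a b \<eta>)
              = Dhat d a b (hatxi d a b \<eta>) (hatxi d a b \<xi>))
       \<and> (\<forall>\<eta>1 \<eta>2. faithful d (rho_of d a b \<eta>1) \<and> faithful d (rho_of d a b \<eta>2) \<longrightarrow>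
            (\<exists>c :: nat \<Rightarrow> real. \<exists>c0 :: real. \<forall>\<xi>. faithful d (rho_of d a b \<xi>) \<longrightarrow>
               Dhat d a b (hatxi d a b \<xi>) (hatxi d a b \<eta>1)
                 - Dhat d a b (hatxi d a b \<xi>) (hatxi d a b \<eta>2)
               = c0 + (\<Sum>i\<in>{1..<d^2}. c i * hatxi d a b \<xi> i)))"
proof (intro conjI allI impI)
  fix \<xi> assume F: "faithful d (rho_of d a b \<xi>)"
  show eq: "hatrho d (rho_of d a b \<xi>) = hatrho_of d a b (hatxi d a b \<xi>)"
    using hatrho_eq_hatrho_of[OF assms(2) _ F] assms(1) by simp
  show "hermitian (hatrho d (rho_of d a b \<xi>))"
    unfolding eq by (rule hermitian_hatrho_of)
  show "mtrace (hatrho d (rho_of d a b \<xi>)) = 0"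
    using assms(1) by (intro mtrace_hatrho[OF rho_of_carrier hermitian_rho_of]) simp
next
  fix \<xi> \<eta> assume "faithful d (rho_of d a b \<xi>) \<and> faithful d (rho_of d a b \<eta>)"
  then show "rel_entropy (rho_of d a b \<xi>) (rho_of d a b \<eta>) = Dhat d a b (hatxi d a b \<eta>) (hatxi d a b \<xi>)"
    using rel_entropy_eq_Dhat[OF assms(2)] assms(1) by simp
next
  fix \<eta>1 \<eta>2
  obtain c c0 where "\<forall>x. Dhat d a b x (hatxi d a b \<eta>1) - Dhat d a b x (hatxi d a b \<eta>2)
      = c0 + (\<Sum>i\<in>{1..<d^2}. c i * x i)"
    using Dhat_diff_affine by blast
  then show "\<exists>c c0. \<forall>\<xi>. faithful d (rho_of d a b \<xi>) \<longrightarrow>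
      Dhat d a b (hatxi d a b \<xi>) (hatxi d a b \<eta>1) - Dhat d a b (hatxi d a b \<xi>) (hatxi d a b \<eta>2)
        = c0 + (\<Sum>i\<in>{1..<d^2}. c i * hatxi d a b \<xi> i)"
    by blast
qed

end
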